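(* Let $\mathfrak a$ be a commutative $n$-ary superalgebra, invariant with respect to an even non-degenerate skew-symmetric form $(\,,)$, which is irreducible but not simple, and let $\lambda\in S^{n+1}\mathfrak a$ be its derived potential. Let $\mathfrak i$ be a maximal non-trivial ideal of $\mathfrak a$, and let $\mathfrak h\subset\mathfrak a$ be an isotropic subspace with $\mathfrak h\cap\mathfrak i^{\perp}=\{0\}$ such that $(\,,)|_{\mathfrak h\oplus\mathfrak i^{\perp}}$ is non-degenerate. Put $\mathfrak w=\mathfrak i^{\perp}\oplus\mathfrak h$ and $\mathfrak g=\mathfrak w^{\perp}$, so that $\mathfrak a=\mathfrak h\oplus\mathfrak i^{\perp}\oplus\mathfrak g$ and $S^{n+1}\mathfrak a=\bigoplus_{i+j+k=n+1}S^i(\mathfrak h)\cdot S^j(\mathfrak i^{\perp})\cdot S^k(\mathfrak g)$; let $\mu\in S^{n+1}(\mathfrak g)$ be the component of $\lambda$ in $S^0(\mathfrak h)\cdot S^0(\mathfrak i^\perp)\cdot S^{n+1}(\mathfrak g)$. Then the $n$-ary superalgebra $(\mathfrak g,\mu)$ is isomorphic to $\mathfrak i/\mathfrak i^{\perp}$; more precisely, for $a_1,\dots,a_n\in\mathfrak g\subset\mathfrak i$ with images $\tilde a_j$ in $\mathfrak i/\mathfrak i^\perp$, one has $\{\tilde a_1,\dots,\tilde a_n\}_{\mathfrak i/\mathfrak i^{\perp}}=\widetilde{\{a_1,\dots,a_n\}_{(\mathfrak g,\mu)}}$.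
   Context: $\mathbb K=\mathbb R$ or $\mathbb C$; spaces are finite-dimensional $\mathbb Z_2$-graded, $\bar a$ denotes parity. The form $(\,,)$ is even (even and odd parts orthogonal) and skew-symmetric in the super sense: $(a,b)=-(-1)^{\bar a\bar b}(b,a)$. An $n$-ary superalgebra is a space with an $n$-linear map $\{\,\}$; commutative means $\{\dots,a_i,a_{i+1},\dots\}=(-1)^{\bar a_i\bar a_{i+1}}\{\dots,a_{i+1},a_i,\dots\}$; invariant means $(a_0,\{a_1,\dots,a_n\})=(-1)^{\bar a_0\bar a_1}(a_1,\{a_0,a_2,\dots,a_n\})$. An ideal is a subspace $\mathfrak i$ with $\{\mathfrak a,\dots,\mathfrak a,\mathfrak i\}\subset\mathfrak i$. Simple: not the trivial one-dimensional algebra and no proper ideals. Irreducible: not a direct sum of two ideals on which the form is non-degenerate. $\mathfrak i^\perp$ denotes the orthogonal complement with respect to $(\,,)$; in the situation of the claim $\mathfrak i^\perp$ is an ideal contained in $\mathfrak i$, $\mathfrak g\subset\mathfrak i$, and $\mathfrak i=\mathfrak i^\perp\oplus\mathfrak g$, so $\mathfrak i/\mathfrak i^\perp$ carries the induced $n$-ary operation. Derived potential: $S^*\mathfrak a$ carries the Poisson bracket determined by $[x,y]=(x,y)$ for $x,y\in\mathfrak a$, $[v,w_1w_2]=[v,w_1]w_2+(-1)^{\bar v\bar w_1}w_1[v,w_2]$, $[v,w]=-(-1)^{\bar v\bar w}[w,v]$. Every commutative invariant $n$-ary superalgebra structure on $\mathfrak a$ has the form $\{a_1,\dots,a_n\}=[a_1,[\dots,[a_n,\lambda]\dots]]$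 for some $\lambda\in S^{n+1}\mathfrak a$, its derived potential; for a non-degenerate subspace $\mathfrak g$ and $\mu\in S^{n+1}\mathfrak g$, $(\mathfrak g,\mu)$ denotes the $n$-ary superalgebra on $\mathfrak g$ defined by the same formula with $\mu$ in place of $\lambda$ (using the restricted form). *)

theory Defs
  imports Main
begin

text \<open>The finite-dimensional super space \<open>a\<close> is \<open>K^N\<close> with a
homogeneous basis \<open>e_0,...,e_{N-1}\<close>; \<open>par i\<close> is the parity of \<open>e_i\<close> (True = odd).\<close>

type_synonym 'k vec = "nat \<Rightarrow> 'k"
type_synonym mon = "nat \<Rightarrow> nat"
type_synonym 'k spoly = "mon \<Rightarrow> 'k"

definition V :: "nat \<Rightarrow> ('k::zero) vec set" where
  "V N = {v. \<forall>i\<ge>N. v i = 0}"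

definition vzero :: "('k::zero) vec" where "vzero = (\<lambda>_. 0)"
definition vadd :: "('k::plus) vec \<Rightarrow> 'k vec \<Rightarrow> 'k vec" where
  "vadd u w = (\<lambda>i. u i + w i)"
definition vsmul :: "'k::times \<Rightarrow> 'k vec \<Rightarrow> 'k vec" where
  "vsmul c v = (\<lambda>i. c * v i)"

definition sgn2 :: "bool \<Rightarrow> 'k::ring_1" where
  "sgn2 b = (if b then -1 else 1)"

definition homog :: "nat \<Rightarrow> (nat \<Rightarrow> bool) \<Rightarrow> bool \<Rightarrow> ('k::zero) vec \<Rightarrow> bool" where
  "homog N par p v \<longleftrightarrow> v \<in> V N \<and> (\<forall>i. v i \<noteq> 0 \<longrightarrow> par i = p)"

definition evpart :: "(nat \<Rightarrow> bool) \<Rightarrow> ('k::zero) vec \<Rightarrow> 'k vec" where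
  "evpart par v = (\<lambda>i. if par i then 0 else v i)"

definition subsp :: "nat \<Rightarrow> ('k::comm_ring_1) vec set \<Rightarrow> bool" where
  "subsp N U \<longleftrightarrow> U \<subseteq> V N \<and> vzero \<in> U \<and> (\<forall>u\<in>U. \<forall>w\<in>U. vadd u w \<in> U)
      \<and> (\<forall>c. \<forall>u\<in>U. vsmul c u \<in> U)"

definition graded :: "nat \<Rightarrow> (nat \<Rightarrow> bool) \<Rightarrow> ('k::comm_ring_1) vec set \<Rightarrow> bool" where
  "graded N par U \<longleftrightarrow> subsp N U \<and> (\<forall>u\<in>U. evpart par u \<in> U)"

definition splus :: "('k::plus) vec set \<Rightarrow> 'k vec set \<Rightarrow> 'k vec set" where
  "splus U W = {vadd u w | u w. u \<in> U \<and> w \<in> W}"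

definition bform :: "nat \<Rightarrow> (nat \<Rightarrow> nat \<Rightarrow> 'k::comm_ring_1) \<Rightarrow> 'k vec \<Rightarrow> 'k vec \<Rightarrow> 'k" where
  "bform N B v w = (\<Sum>i<N. \<Sum>j<N. v i * B i j * w j)"

definition even_form :: "nat \<Rightarrow> (nat \<Rightarrow> bool) \<Rightarrow> (nat \<Rightarrow> nat \<Rightarrow> 'k::comm_ring_1) \<Rightarrow> bool" where
  "even_form N par B \<longleftrightarrow> (\<forall>p q v w. homog N par p v \<and> homog N par q w \<and> p \<noteq> q
      \<longrightarrow> bform N B v w = 0)"

definition superskew :: "nat \<Rightarrow> (nat \<Rightarrow> bool) \<Rightarrow> (nat \<Rightarrow> nat \<Rightarrow> 'k::comm_ring_1) \<Rightarrow> bool" where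
  "superskew N par B \<longleftrightarrow> (\<forall>p q v w. homog N par p v \<and> homog N par q w
      \<longrightarrow> bform N B v w = - (sgn2 (p \<and> q) * bform N B w v))"

definition nondeg_on :: "nat \<Rightarrow> (nat \<Rightarrow> nat \<Rightarrow> 'k::comm_ring_1) \<Rightarrow> 'k vec set \<Rightarrow> bool" where
  "nondeg_on N B U \<longleftrightarrow> (\<forall>u\<in>U. (\<forall>w\<in>U. bform N B u w = 0) \<longrightarrow> u = vzero)"

definition isotropic :: "nat \<Rightarrow> (nat \<Rightarrow> nat \<Rightarrow> 'k::comm_ring_1) \<Rightarrow> 'k vec set \<Rightarrow> bool" where
  "isotropic N B U \<longleftrightarrow> (\<forall>u\<in>U. \<forall>w\<in>U. bform N B u w = 0)"

definition perp :: "nat \<Rightarrow> (nat \<Rightarrow> nat \<Rightarrow> 'k::comm_ring_1) \<Rightarrow> 'k vec set \<Rightarrow> 'k vec set" where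
  "perp N B U = {v \<in> V N. \<forall>u\<in>U. bform N B v u = 0}"

definition multilinear :: "nat \<Rightarrow> nat \<Rightarrow> ('k::comm_ring_1 vec list \<Rightarrow> 'k vec) \<Rightarrow> bool" where
  "multilinear N n op \<longleftrightarrow>
     (\<forall>as. length as = n \<and> set as \<subseteq> V N \<longrightarrow> op as \<in> V N) \<and>
     (\<forall>as k u w c. length as = n \<and> set as \<subseteq> V N \<and> k < n \<and> u \<in> V N \<and> w \<in> V N \<longrightarrow>
        op (as[k := vadd u w]) = vadd (op (as[k := u])) (op (as[k := w])) \<and>
        op (as[k := vsmul c u]) = vsmul c (op (as[k := u])))"

definition commutative :: "nat \<Rightarrow> (nat \<Rightarrow> bool) \<Rightarrow> nat \<Rightarrow> ('k::comm_ring_1 vec list \<Rightarrow> 'k vec) \<Rightarrow> bool" where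
  "commutative N par n op \<longleftrightarrow>
     (\<forall>as k p q. length as = n \<and> set as \<subseteq> V N \<and> Suc k < n \<and>
        homog N par p (as ! k) \<and> homog N par q (as ! Suc k) \<longrightarrow>
        op as = vsmul (sgn2 (p \<and> q)) (op (as[k := as ! Suc k, Suc k := as ! k])))"

definition invariant :: "nat \<Rightarrow> (nat \<Rightarrow> bool) \<Rightarrow> (nat \<Rightarrow> nat \<Rightarrow> 'k::comm_ring_1) \<Rightarrow> nat
      \<Rightarrow> ('k vec list \<Rightarrow> 'k vec) \<Rightarrow> bool" where
  "invariant N par B n op \<longleftrightarrow>
     (\<forall>a0 a1 rest p q. homog N par p a0 \<and> homog N par q a1 \<and> length rest = n - 1 \<and> set rest \<subseteq> V N \<longrightarrow>
        bform N B a0 (op (a1 # rest)) = sgn2 (p \<and> q) * bform N B a1 (op (a0 # rest)))"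

definition ideal :: "nat \<Rightarrow> (nat \<Rightarrow> bool) \<Rightarrow> nat \<Rightarrow> ('k::comm_ring_1 vec list \<Rightarrow> 'k vec) \<Rightarrow> 'k vec set \<Rightarrow> bool" where
  "ideal N par n op I \<longleftrightarrow> graded N par I \<and>
     (\<forall>as. length as = n \<and> set as \<subseteq> V N \<and> last as \<in> I \<longrightarrow> op as \<in> I)"

definition nontrivial_ideal :: "nat \<Rightarrow> (nat \<Rightarrow> bool) \<Rightarrow> nat \<Rightarrow> ('k::comm_ring_1 vec list \<Rightarrow> 'k vec) \<Rightarrow> 'k vec set \<Rightarrow> bool" where
  "nontrivial_ideal N par n op I \<longleftrightarrow> ideal N par n op I \<and> I \<noteq> {vzero} \<and> I \<noteq> V N"

definition maximal_nontrivial_ideal :: "nat \<Rightarrow> (nat \<Rightarrow> bool) \<Rightarrow> nat \<Rightarrow> ('k::comm_ring_1 vec list \<Rightarrow> 'k vec) \<Rightarrow> 'k vec set \<Rightarrow> bool" where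
  "maximal_nontrivial_ideal N par n op I \<longleftrightarrow> nontrivial_ideal N par n op I \<and>
     \<not> (\<exists>J. nontrivial_ideal N par n op J \<and> I \<subset> J)"

definition trivial_one_dim :: "nat \<Rightarrow> nat \<Rightarrow> ('k::comm_ring_1 vec list \<Rightarrow> 'k vec) \<Rightarrow> bool" where
  "trivial_one_dim N n op \<longleftrightarrow> N = 1 \<and> (\<forall>as. length as = n \<and> set as \<subseteq> V N \<longrightarrow> op as = vzero)"

definition simple :: "nat \<Rightarrow> (nat \<Rightarrow> bool) \<Rightarrow> nat \<Rightarrow> ('k::comm_ring_1 vec list \<Rightarrow> 'k vec) \<Rightarrow> bool" where
  "simple N par n op \<longleftrightarrow> \<not> trivial_one_dim N n op \<and> \<not> (\<exists>I. nontrivial_ideal N par n op I)"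

definition irreducible :: "nat \<Rightarrow> (nat \<Rightarrow> bool) \<Rightarrow> (nat \<Rightarrow> nat \<Rightarrow> 'k::comm_ring_1) \<Rightarrow> nat
      \<Rightarrow> ('k vec list \<Rightarrow> 'k vec) \<Rightarrow> bool" where
  "irreducible N par B n op \<longleftrightarrow>
     \<not> (\<exists>I J. ideal N par n op I \<and> ideal N par n op J \<and> I \<noteq> {vzero} \<and> J \<noteq> {vzero} \<and>
           I \<inter> J = {vzero} \<and> splus I J = V N \<and> nondeg_on N B I \<and> nondeg_on N B J)"

text \<open>An element of \<open>S^* a\<close> is given by its coefficients on the ordered monomials
\<open>x_0^{m 0} x_1^{m 1} ... \<close> (odd generators have exponent \<open>\<le> 1\<close>).\<close>

definition unitm :: "nat \<Rightarrow> mon" where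
  "unitm i = (\<lambda>k. if k = i then 1 else 0)"

definition valid_mon :: "nat \<Rightarrow> (nat \<Rightarrow> bool) \<Rightarrow> mon \<Rightarrow> bool" where
  "valid_mon N par m \<longleftrightarrow> (\<forall>i\<ge>N. m i = 0) \<and> (\<forall>i. par i \<longrightarrow> m i \<le> 1)"

definition mdeg :: "nat \<Rightarrow> mon \<Rightarrow> nat" where
  "mdeg N m = (\<Sum>i<N. m i)"

definition Sdeg :: "nat \<Rightarrow> (nat \<Rightarrow> bool) \<Rightarrow> nat \<Rightarrow> ('k::zero) spoly \<Rightarrow> bool" where
  "Sdeg N par d f \<longleftrightarrow> (\<forall>m. f m \<noteq> 0 \<longrightarrow> valid_mon N par m \<and> mdeg N m = d)"

text \<open>Sign arising when reordering the product of two ordered monomials.\<close>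
definition msgn :: "(nat \<Rightarrow> bool) \<Rightarrow> mon \<Rightarrow> mon \<Rightarrow> 'k::ring_1" where
  "msgn par m1 m2 = (if \<exists>i. par i \<and> 0 < m1 i \<and> 0 < m2 i then 0
     else (-1) ^ card {(i,j). par i \<and> par j \<and> j < i \<and> 0 < m1 i \<and> 0 < m2 j})"

definition pmul :: "(nat \<Rightarrow> bool) \<Rightarrow> ('k::comm_ring_1) spoly \<Rightarrow> 'k spoly \<Rightarrow> 'k spoly" where
  "pmul par f g = (\<lambda>m. \<Sum>m1\<in>{m1. \<forall>i. m1 i \<le> m i}.
      msgn par m1 (\<lambda>i. m i - m1 i) * f m1 * g (\<lambda>i. m i - m1 i))"

definition pone :: "('k::comm_ring_1) spoly" where
  "pone = (\<lambda>m. if m = (\<lambda>_. 0) then 1 else 0)"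

definition emb :: "nat \<Rightarrow> ('k::comm_ring_1) vec \<Rightarrow> 'k spoly" where
  "emb N v = (\<lambda>m. \<Sum>i<N. if m = unitm i then v i else 0)"

definition deg1 :: "nat \<Rightarrow> ('k::comm_ring_1) spoly \<Rightarrow> 'k vec" where
  "deg1 N f = (\<lambda>i. if i < N then f (unitm i) else 0)"

definition vprod :: "nat \<Rightarrow> (nat \<Rightarrow> bool) \<Rightarrow> ('k::comm_ring_1) vec list \<Rightarrow> 'k spoly" where
  "vprod N par vs = foldr (\<lambda>v acc. pmul par (emb N v) acc) vs pone"

definition kspan :: "('k::comm_ring_1) spoly set \<Rightarrow> 'k spoly set" where
  "kspan S = {f. \<exists>F c. finite F \<and> F \<subseteq> S \<and> f = (\<lambda>m. \<Sum>x\<in>F. c x * x m)}"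

definition Ssub :: "nat \<Rightarrow> (nat \<Rightarrow> bool) \<Rightarrow> nat \<Rightarrow> ('k::comm_ring_1) vec set \<Rightarrow> 'k spoly set" where
  "Ssub N par d U = kspan {vprod N par vs | vs. length vs = d \<and> set vs \<subseteq> U}"

definition Srest :: "nat \<Rightarrow> (nat \<Rightarrow> bool) \<Rightarrow> nat \<Rightarrow> ('k::comm_ring_1) vec set \<Rightarrow> 'k vec set
      \<Rightarrow> 'k vec set \<Rightarrow> 'k spoly set" where
  "Srest N par d H P G = kspan {vprod N par (hs @ ps @ gs) | hs ps gs.
      set hs \<subseteq> H \<and> set ps \<subseteq> P \<and> set gs \<subseteq> G \<and>
      length hs + length ps + length gs = d \<and> (hs \<noteq> [] \<or> ps \<noteq> [])}"

text \<open>Left superderivative \<open>\<partial>/\<partial>x_j\<close> on ordered monomials.\<close>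
definition pder :: "(nat \<Rightarrow> bool) \<Rightarrow> nat \<Rightarrow> ('k::comm_ring_1) spoly \<Rightarrow> 'k spoly" where
  "pder par j f = (\<lambda>m. (if par j then (-1) ^ (\<Sum>k<j. if par k then m k else 0) else 1)
      * of_nat (m j + 1) * f (m(j := m j + 1)))"

text \<open>Poisson bracket \<open>[v, f]\<close> for \<open>v \<in> a\<close>, \<open>f \<in> S^* a\<close>: the superderivation of
parity \<open>v\<close> determined by \<open>[e_i, e_j] = (e_i, e_j) = B i j\<close> and the Leibniz rule.\<close>
definition pbr :: "nat \<Rightarrow> (nat \<Rightarrow> bool) \<Rightarrow> (nat \<Rightarrow> nat \<Rightarrow> 'k::comm_ring_1) \<Rightarrow> 'k vec \<Rightarrow> 'k spoly \<Rightarrow> 'k spoly" where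
  "pbr N par B v f = (\<lambda>m. \<Sum>i<N. \<Sum>j<N. v i * B i j * pder par j f m)"

definition brk :: "nat \<Rightarrow> (nat \<Rightarrow> bool) \<Rightarrow> (nat \<Rightarrow> nat \<Rightarrow> 'k::comm_ring_1) \<Rightarrow> 'k vec list \<Rightarrow> 'k spoly \<Rightarrow> 'k spoly" where
  "brk N par B vs f = foldr (\<lambda>v acc. pbr N par B v acc) vs f"

definition potop :: "nat \<Rightarrow> (nat \<Rightarrow> bool) \<Rightarrow> (nat \<Rightarrow> nat \<Rightarrow> 'k::comm_ring_1) \<Rightarrow> 'k spoly \<Rightarrow> 'k vec list \<Rightarrow> 'k vec" where
  "potop N par B f as = deg1 N (brk N par B as f)"

definition coset :: "('k::plus) vec set \<Rightarrow> 'k vec \<Rightarrow> 'k vec set" where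
  "coset P v = {vadd v u | u. u \<in> P}"

definition quot :: "('k::plus) vec set \<Rightarrow> 'k vec set \<Rightarrow> 'k vec set set" where
  "quot I P = coset P ` I"

end

theory Submission
  imports Defs "HOL-Library.Function_Algebras" "HOL.Vector_Spaces"
begin

text \<open>Since \<open>\<ii>\<^sup>\<perp>\<close> is again an ideal, maximality of \<open>\<ii>\<close> and irreducibility force
\<open>\<ii>\<^sup>\<perp> \<subseteq> \<ii>\<close>, and non-degeneracy gives \<open>(\<ii>\<^sup>\<perp>)\<^sup>\<perp> = \<ii>\<close>; hence \<open>\<gg> = (\<ii>\<^sup>\<perp> \<oplus> \<hh>)\<^sup>\<perp> \<subseteq> \<ii>\<close>,
and \<open>\<gg>\<close> maps bijectively onto \<open>\<ii>/\<ii>\<^sup>\<perp>\<close> because the form is non-degenerate on \<open>\<hh> \<oplus> \<ii>\<^sup>\<perp>\<close>.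
Write \<open>\<lambda> = \<mu> + \<rho>\<close>, where every monomial of \<open>\<rho>\<close> has a factor in \<open>\<hh> \<oplus> \<ii>\<^sup>\<perp>\<close>. Bracketing
with \<open>a \<in> \<gg>\<close> is a superderivation killing \<open>\<hh> \<oplus> \<ii>\<^sup>\<perp>\<close>, so it preserves that property, and
after \<open>n\<close> brackets the \<open>\<rho>\<close>-part of \<open>{a\<^sub>1,\<dots>,a\<^sub>n}\<close> lies in \<open>\<hh> \<oplus> \<ii>\<^sup>\<perp>\<close>. Its \<open>\<hh>\<close>-component
is a difference of elements of \<open>\<ii>\<close>, so it is orthogonal to \<open>\<hh>\<close> and to \<open>\<ii>\<^sup>\<perp>\<close> and therefore vanishes.\<close>

section \<open>Coordinate vectors and graded subspaces\<close>

interpretation vsp: vector_space "vsmul :: 'k::field \<Rightarrow> 'k vec \<Rightarrow> 'k vec"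
  by unfold_locales (auto simp: vsmul_def fun_eq_iff algebra_simps)

lemma vadd_eq: "vadd u w = u + w" by (simp add: vadd_def fun_eq_iff)
lemma vzero_eq: "vzero = 0" by (simp add: vzero_def fun_eq_iff)
lemma vsmul_vsmul: "vsmul a (vsmul b v) = vsmul (a * b) (v :: 'k::comm_ring_1 vec)"
  by (simp add: vsmul_def fun_eq_iff mult.assoc)
lemma vsmul_one: "vsmul 1 v = (v :: 'k::comm_ring_1 vec)"
  by (simp add: vsmul_def)
lemma vsmul_minus_one: "vsmul (-1) x = - (x::'k::comm_ring_1 vec)"
  by (simp add: vsmul_def fun_eq_iff)

definition odpart :: "(nat \<Rightarrow> bool) \<Rightarrow> ('k::zero) vec \<Rightarrow> 'k vec" where
  "odpart par v = (\<lambda>i. if par i then v i else 0)"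

lemma evpart_add_odpart: "evpart par v + odpart par v = (v::'k::comm_ring_1 vec)"
  by (simp add: evpart_def odpart_def fun_eq_iff)

lemma evpart_evpart[simp]: "evpart par (evpart par u) = evpart par u" by (simp add: evpart_def fun_eq_iff)
lemma odpart_odpart[simp]: "odpart par (odpart par u) = odpart par u" by (simp add: odpart_def fun_eq_iff)
lemma evpart_odpart[simp]: "evpart par (odpart par u) = 0" by (simp add: evpart_def odpart_def fun_eq_iff)
lemma odpart_evpart[simp]: "odpart par (evpart par u) = 0" by (simp add: evpart_def odpart_def fun_eq_iff)

lemma V_add: "(u::'k::comm_ring_1 vec) \<in> V N \<Longrightarrow> w \<in> V N \<Longrightarrow> u + w \<in> V N" by (simp add: V_def)
lemma V_smul: "(u::'k::comm_ring_1 vec) \<in> V N \<Longrightarrow> vsmul c u \<in> V N" by (simp add: V_def vsmul_def)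
lemma V_evpart: "(u::'k::comm_ring_1 vec) \<in> V N \<Longrightarrow> evpart par u \<in> V N" by (auto simp: V_def evpart_def)
lemma V_odpart: "(u::'k::comm_ring_1 vec) \<in> V N \<Longrightarrow> odpart par u \<in> V N" by (auto simp: V_def odpart_def)
lemma V_zero: "(0::'k::comm_ring_1 vec) \<in> V N" by (simp add: V_def)

lemma homog_evpart: "(u::'k::comm_ring_1 vec) \<in> V N \<Longrightarrow> homog N par False (evpart par u)"
  unfolding homog_def using V_evpart[of u N par] by (auto simp: evpart_def)
lemma homog_odpart: "(u::'k::comm_ring_1 vec) \<in> V N \<Longrightarrow> homog N par True (odpart par u)"
  unfolding homog_def using V_odpart[of u N par] by (auto simp: odpart_def)

lemma subsp_add: "subsp N X \<Longrightarrow> x \<in> X \<Longrightarrow> y \<in> X \<Longrightarrow> x + y \<in> X"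
  by (simp add: subsp_def vadd_eq)
lemma subsp_smul: "subsp N X \<Longrightarrow> x \<in> X \<Longrightarrow> vsmul c x \<in> X"
  by (simp add: subsp_def)
lemma subsp_zero: "subsp N X \<Longrightarrow> 0 \<in> X"
  by (simp add: subsp_def vzero_eq)
lemma subsp_neg: "subsp N X \<Longrightarrow> x \<in> X \<Longrightarrow> - x \<in> X"
  using subsp_smul[of N X x "-1"] vsmul_minus_one[of x] by simp
lemma subsp_diff: "subsp N X \<Longrightarrow> x \<in> X \<Longrightarrow> y \<in> X \<Longrightarrow> x - y \<in> X"
  using subsp_add[of N X x "- y"] subsp_neg[of N X y] by simp
lemma subsp_subset_V: "subsp N X \<Longrightarrow> X \<subseteq> V N"
  by (simp add: subsp_def)
lemma subsp_V: "subsp N (V N :: 'k::comm_ring_1 vec set)"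
  by (auto simp: subsp_def V_def vzero_def vadd_def vsmul_def)
lemma subsp_imp_subspace: "subsp N X \<Longrightarrow> vsp.subspace X"
  unfolding vsp.subspace_def subsp_def by (simp add: vadd_eq vzero_eq)

lemma subsp_lincomb:
  fixes v :: "'a \<Rightarrow> 'k::comm_ring_1 vec"
  assumes X: "subsp N X" and F: "finite F" and v: "\<forall>x\<in>F. v x \<in> X"
  shows "(\<lambda>i. \<Sum>x\<in>F. c x * v x i) \<in> X"
  using F v
proof (induct F rule: finite_induct)
  case empty then show ?case using X by (simp add: subsp_def vzero_def)
next
  case (insert a F)
  have "vadd (vsmul (c a) (v a)) (\<lambda>i. \<Sum>x\<in>F. c x * v x i) \<in> X"
    using X insert by (simp add: subsp_def)
  then show ?case using insert by (simp add: vadd_def vsmul_def)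
qed

lemma graded_subsp: "graded N par X \<Longrightarrow> subsp N X"
  by (simp add: graded_def)
lemma graded_subset_V: "graded N par X \<Longrightarrow> X \<subseteq> V N"
  by (simp add: graded_def subsp_def)
lemma graded_V: "graded N par (V N)"
  using subsp_V by (auto simp: graded_def V_def evpart_def)
lemma graded_evpart: "graded N par X \<Longrightarrow> x \<in> X \<Longrightarrow> evpart par x \<in> X"
  by (simp add: graded_def)
lemma graded_odpart: "graded N par X \<Longrightarrow> x \<in> X \<Longrightarrow> odpart par x \<in> X"
proof -
  assume g: "graded N par X" and x: "x \<in> X"
  have "x - evpart par x \<in> X" using subsp_diff[OF graded_subsp[OF g] x graded_evpart[OF g x]] .
  moreover have "x - evpart par x = odpart par x" by (simp add: evpart_def odpart_def fun_eq_iff)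
  ultimately show ?thesis by simp
qed
lemma graded_parts: "graded N par X \<Longrightarrow> \<forall>x\<in>X. evpart par x \<in> X \<and> odpart par x \<in> X"
  using graded_evpart graded_odpart by blast

lemma splus_mem: "u \<in> U \<Longrightarrow> w \<in> W \<Longrightarrow> u + w \<in> splus U W"
  by (auto simp: splus_def vadd_eq)
lemma splus_memE: "x \<in> splus U W \<Longrightarrow> \<exists>u w. x = u + w \<and> u \<in> U \<and> w \<in> W"
  by (auto simp: splus_def vadd_eq)
lemma splus_upper_left: "subsp N W \<Longrightarrow> U \<subseteq> splus U W"
  using splus_mem[of _ U 0 W] subsp_zero[of N W] by auto
lemma splus_upper_right: "subsp N U \<Longrightarrow> W \<subseteq> splus U W"
  using splus_mem[of 0 U _ W] subsp_zero[of N U] by auto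
lemma subsp_splus:
  assumes U: "subsp N (U :: 'k::comm_ring_1 vec set)" and W: "subsp N W"
  shows "subsp N (splus U W)"
  unfolding subsp_def
proof (intro conjI ballI allI)
  show "splus U W \<subseteq> V N"
  proof
    fix x assume "x \<in> splus U W"
    then obtain u w where "x = u + w" "u \<in> U" "w \<in> W" using splus_memE by blast
    then show "x \<in> V N" using U W V_add[of u N w] by (auto simp: subsp_def)
  qed
  show "vzero \<in> splus U W" using splus_mem[OF subsp_zero[OF U] subsp_zero[OF W]] by (simp add: vzero_eq)
next
  fix x y assume "x \<in> splus U W" "y \<in> splus U W"
  then obtain u1 w1 u2 w2 where h: "x = u1 + w1" "u1 \<in> U" "w1 \<in> W" "y = u2 + w2" "u2 \<in> U" "w2 \<in> W"
    using splus_memE by metis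
  have "(u1 + w1) + (u2 + w2) = (u1 + u2) + (w1 + w2)" by (simp add: algebra_simps)
  moreover have "(u1 + u2) + (w1 + w2) \<in> splus U W"
    using splus_mem[OF subsp_add[OF U h(2) h(5)] subsp_add[OF W h(3) h(6)]] .
  ultimately show "vadd x y \<in> splus U W" using h by (simp add: vadd_eq add_ac)
next
  fix c x assume "x \<in> splus U W"
  then obtain u w where "x = u + w" "u \<in> U" "w \<in> W" using splus_memE by blast
  moreover have "vsmul c (u + w) = vsmul c u + vsmul c w" by (simp add: vsmul_def fun_eq_iff algebra_simps)
  ultimately show "vsmul c x \<in> splus U W"
    using splus_mem[OF subsp_smul[OF U] subsp_smul[OF W]] by simp
qed

lemma graded_splus:
  assumes U: "graded N par (U :: 'k::comm_ring_1 vec set)" and W: "graded N par W"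
  shows "graded N par (splus U W)"
proof -
  have "evpart par x \<in> splus U W" if xs: "x \<in> splus U W" for x
  proof -
    obtain u w where h: "x = u + w" "u \<in> U" "w \<in> W" using splus_memE[OF xs] by blast
    have e: "evpart par (u + w) = evpart par u + evpart par w" by (simp add: evpart_def fun_eq_iff)
    have "evpart par u \<in> U" "evpart par w \<in> W" using U W h by (auto simp: graded_def)
    then show ?thesis using splus_mem h e by metis
  qed
  moreover have "subsp N (splus U W)" using U W by (intro subsp_splus) (auto simp: graded_def)
  ultimately show ?thesis by (simp add: graded_def)
qed

lemma coset_add_member:
  assumes P: "subsp N (P :: 'k::comm_ring_1 vec set)" and p: "p \<in> P"
  shows "coset P (v + p) = coset P v"
proof
  show "coset P (v + p) \<subseteq> coset P v"
  proof
    fix x assume "x \<in> coset P (v + p)"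
    then obtain u where "x = vadd (v + p) u" "u \<in> P" by (auto simp: coset_def)
    then have "x = vadd v (p + u)" "p + u \<in> P" using subsp_add[OF P p] by (auto simp: vadd_eq add.assoc)
    then show "x \<in> coset P v" by (auto simp: coset_def)
  qed
  show "coset P v \<subseteq> coset P (v + p)"
  proof
    fix x assume "x \<in> coset P v"
    then obtain u where "x = vadd v u" "u \<in> P" by (auto simp: coset_def)
    then have "x = vadd (v + p) (u + - p)" "u + - p \<in> P" using subsp_add[OF P _ subsp_neg[OF P p]]
      by (auto simp: vadd_eq algebra_simps)
    then show "x \<in> coset P (v + p)" by (auto simp: coset_def)
  qed
qed

lemma mem_coset_self: "subsp N P \<Longrightarrow> v \<in> coset P v"
  using subsp_zero[of N P] by (force simp: coset_def vadd_eq)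

lemma coset_eq_imp_diff_mem:
  assumes P: "subsp N P" and e: "coset P x = coset P y"
  shows "x - y \<in> P"
proof -
  have "x \<in> coset P y" using mem_coset_self[OF P, of x] e by simp
  then show ?thesis by (auto simp: coset_def vadd_eq)
qed
lemma sum_fun_apply: "(sum f A) x = sum (\<lambda>a. f a x) A"
  by (induct A rule: infinite_finite_induct) auto

definition unit_vec :: "nat \<Rightarrow> 'k::comm_ring_1 vec" where "unit_vec i = (\<lambda>k. if k = i then 1 else 0)"

lemma V_subset_span_unit_vecs: "V N \<subseteq> vsp.span (unit_vec ` {..<N} :: 'k::field vec set)"
proof
  fix v :: "'k vec" assume v: "v \<in> V N"
  have "v = (\<Sum>i<N. vsmul (v i) (unit_vec i))"
  proof
    fix k
    have "(\<Sum>i<N. vsmul (v i) (unit_vec i)) k = (\<Sum>i<N. if i = k then v i else 0)"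
      unfolding sum_fun_apply by (intro sum.cong) (auto simp: vsmul_def unit_vec_def)
    also have "\<dots> = (if k < N then v k else 0)" by (simp add: sum.delta')
    also have "\<dots> = v k" using v by (simp add: V_def)
    finally show "v k = (\<Sum>i<N. vsmul (v i) (unit_vec i)) k" by simp
  qed
  also have "\<dots> \<in> vsp.span (unit_vec ` {..<N})"
    by (intro vsp.span_sum vsp.span_scale vsp.span_base) auto
  finally show "v \<in> vsp.span (unit_vec ` {..<N})" .
qed

lemma subsp_finite_spanning_set:
  assumes U: "subsp N (U :: 'k::field vec set)"
  shows "\<exists>F. finite F \<and> F \<subseteq> U \<and> vsp.span F = U"
proof -
  obtain Bs where Bs: "Bs \<subseteq> U" "vsp.independent Bs" "U \<subseteq> vsp.span Bs" "card Bs = vsp.dim U"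
    by (rule vsp.basis_exists[of U])
  have UV: "U \<subseteq> V N" using U by (simp add: subsp_def)
  have "Bs \<subseteq> vsp.span (unit_vec ` {..<N})" using Bs(1) UV V_subset_span_unit_vecs[of N] by blast
  from vsp.independent_span_bound[OF _ Bs(2) this] have "finite Bs" by simp
  moreover have "vsp.span Bs = U"
    using vsp.span_subspace[OF Bs(1) Bs(3) subsp_imp_subspace[OF U]] .
  ultimately show ?thesis using Bs(1) by blast
qed
section \<open>The bilinear form\<close>

lemma bform_add_left: "bform N B (u + v) w = bform N B u w + bform N B v w"
  by (simp add: bform_def algebra_simps sum.distrib)
lemma bform_add_right: "bform N B w (u + v) = bform N B w u + bform N B w v"
  by (simp add: bform_def algebra_simps sum.distrib)
lemma bform_smul_left: "bform N B (vsmul c u) w = c * bform N B u w"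
  by (simp add: bform_def vsmul_def sum_distrib_left algebra_simps)
lemma bform_smul_right: "bform N B w (vsmul c u) = c * bform N B w u"
  by (simp add: bform_def vsmul_def sum_distrib_left algebra_simps)
lemma bform_zero_left[simp]: "bform N B 0 w = 0" by (simp add: bform_def)
lemma bform_zero_right[simp]: "bform N B w 0 = 0" by (simp add: bform_def)
lemma bform_neg_left: "bform N B (- u) w = - bform N B u w"
  by (simp add: bform_def sum_negf)
lemma bform_neg_right: "bform N B w (- u) = - bform N B w u"
  by (simp add: bform_def sum_negf)
lemma bform_diff_left: "bform N B (u - v) w = bform N B u w - bform N B v w"
  using bform_add_left[of N B u "-v" w] bform_neg_left[of N B v w] by simp
lemma bform_diff_right: "bform N B w (u - v) = bform N B w u - bform N B w v"
  using bform_add_right[of N B w u "-v"] bform_neg_right[of N B w v] by simp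

lemma bform_span_eq:
  assumes "\<forall>u\<in>U. bform N B k u = bform N B x u" "v \<in> vsp.span U"
  shows "bform N B k v = bform N B x v"
  using assms(2)
proof (induct rule: vsp.span_induct_alt)
  case base then show ?case by (simp add: bform_def)
next
  case (step c u y) then show ?case using assms(1) bform_add_right[of N B k "vsmul c u" y] bform_add_right[of N B x "vsmul c u" y]
    bform_smul_right[of N B k c u] bform_smul_right[of N B x c u] by (simp add: plus_fun_def)
qed

lemma bform_span_zero:
  assumes "\<forall>u\<in>U. bform N B k u = 0" "v \<in> vsp.span U"
  shows "bform N B k v = 0"
  using bform_span_eq[of U N B k 0 v] assms by simp

lemma bform_unit_vec:
  fixes B :: "nat \<Rightarrow> nat \<Rightarrow> 'k::comm_ring_1"
  assumes "i < N" "j < N" shows "bform N B (unit_vec i) (unit_vec j) = B i j"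
proof -
  have pw: "unit_vec i a * B a b * unit_vec j b = (if a = i then (if b = j then B a b else 0) else 0)" for a b
    by (simp add: unit_vec_def)
  have inner: "(\<Sum>b<N. if a = i then (if b = j then B a b else 0) else 0) = (if a = i then B a j else 0)" for a
    using assms by (cases "a = i") (simp_all add: sum.delta)
  show ?thesis unfolding bform_def pw inner using assms by (simp add: sum.delta)
qed

lemma unit_vec_V: "i < N \<Longrightarrow> (unit_vec i :: 'k::comm_ring_1 vec) \<in> V N" by (simp add: unit_vec_def V_def)

lemma even_form_gram:
  fixes B :: "nat \<Rightarrow> nat \<Rightarrow> 'k::comm_ring_1"
  assumes even: "even_form N par B"
  shows "\<forall>i<N. \<forall>j<N. par i \<noteq> par j \<longrightarrow> B i j = 0"
proof (intro allI impI)
  fix i j assume ij: "i < N" "j < N" "par i \<noteq> par j"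
  have "homog N par (par i) (unit_vec i :: 'k vec)" "homog N par (par j) (unit_vec j :: 'k vec)"
    using ij unit_vec_V[of i N, where 'k='k] unit_vec_V[of j N, where 'k='k] unfolding homog_def by (auto simp: unit_vec_def)
  then have "bform N B (unit_vec i) (unit_vec j) = 0" using even ij unfolding even_form_def by blast
  then show "B i j = 0" using bform_unit_vec ij by metis
qed

lemma perp_subsp: "subsp N (perp N B X)"
proof -
  have "vadd u w \<in> perp N B X" if "u \<in> perp N B X" "w \<in> perp N B X" for u w
    using that V_add[of u N w] bform_add_left[of N B u w] by (auto simp: perp_def vadd_eq)
  moreover have "vsmul c u \<in> perp N B X" if "u \<in> perp N B X" for u c
    using that V_smul[of u N c] bform_smul_left[of N B c u] by (auto simp: perp_def)
  moreover have "vzero \<in> perp N B X" using V_zero by (auto simp: perp_def vzero_eq)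
  ultimately show ?thesis unfolding subsp_def perp_def by auto
qed

context
  fixes N :: nat and par :: "nat \<Rightarrow> bool" and B :: "nat \<Rightarrow> nat \<Rightarrow> 'k::field"
  assumes even: "even_form N par B" and skew: "superskew N par B"
begin

lemma bform_evpart_odpart: "x \<in> V N \<Longrightarrow> y \<in> V N \<Longrightarrow> bform N B (evpart par x) (odpart par y) = 0"
proof -
  assume "x \<in> V N" "y \<in> V N"
  then have "homog N par False (evpart par x)" "homog N par True (odpart par y)" by (auto intro: homog_evpart homog_odpart)
  then show ?thesis using even unfolding even_form_def by blast
qed
lemma bform_odpart_evpart: "x \<in> V N \<Longrightarrow> y \<in> V N \<Longrightarrow> bform N B (odpart par x) (evpart par y) = 0"
proof -
  assume "x \<in> V N" "y \<in> V N"
  then have "homog N par True (odpart par x)" "homog N par False (evpart par y)" by (auto intro: homog_evpart homog_odpart)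
  then show ?thesis using even unfolding even_form_def by blast
qed

lemma bform_parity_split: "x \<in> V N \<Longrightarrow> y \<in> V N \<Longrightarrow>
  bform N B x y = bform N B (evpart par x) (evpart par y) + bform N B (odpart par x) (odpart par y)"
proof -
  assume xy: "x \<in> V N" "y \<in> V N"
  have "bform N B x y = bform N B (evpart par x + odpart par x) (evpart par y + odpart par y)"
    by (simp add: evpart_add_odpart)
  also have "\<dots> = bform N B (evpart par x) (evpart par y) + bform N B (odpart par x) (odpart par y)"
    using bform_evpart_odpart[OF xy] bform_odpart_evpart[OF xy] by (simp add: bform_add_left bform_add_right)
  finally show ?thesis .
qed

lemma bform_evpart_skew: "x \<in> V N \<Longrightarrow> y \<in> V N \<Longrightarrow>
  bform N B (evpart par x) (evpart par y) = - bform N B (evpart par y) (evpart par x)"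
proof -
  assume "x \<in> V N" "y \<in> V N"
  then have "homog N par False (evpart par x)" "homog N par False (evpart par y)" by (auto intro: homog_evpart)
  then show ?thesis using skew[unfolded superskew_def, rule_format, of False "evpart par x" False "evpart par y"]
    by (simp add: sgn2_def)
qed
lemma bform_odpart_symm: "x \<in> V N \<Longrightarrow> y \<in> V N \<Longrightarrow>
  bform N B (odpart par x) (odpart par y) = bform N B (odpart par y) (odpart par x)"
proof -
  assume "x \<in> V N" "y \<in> V N"
  then have "homog N par True (odpart par x)" "homog N par True (odpart par y)" by (auto intro: homog_odpart)
  then show ?thesis using skew[unfolded superskew_def, rule_format, of True "odpart par x" True "odpart par y"]
    by (simp add: sgn2_def)
qed

lemma bform_evpart_left: "x \<in> V N \<Longrightarrow> y \<in> V N \<Longrightarrow> bform N B (evpart par x) y = bform N B (evpart par x) (evpart par y)"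
  using bform_parity_split[of "evpart par x" y] V_evpart[of x N par] by simp
lemma bform_odpart_left: "x \<in> V N \<Longrightarrow> y \<in> V N \<Longrightarrow> bform N B (odpart par x) y = bform N B (odpart par x) (odpart par y)"
  using bform_parity_split[of "odpart par x" y] V_odpart[of x N par] by simp
lemma bform_evpart_right: "x \<in> V N \<Longrightarrow> y \<in> V N \<Longrightarrow> bform N B x (evpart par y) = bform N B (evpart par x) (evpart par y)"
  using bform_parity_split[of x "evpart par y"] V_evpart[of y N par] by simp
lemma bform_odpart_right: "x \<in> V N \<Longrightarrow> y \<in> V N \<Longrightarrow> bform N B x (odpart par y) = bform N B (odpart par x) (odpart par y)"
  using bform_parity_split[of x "odpart par y"] V_odpart[of y N par] by simp

lemma orth_graded_left_imp_right:
  assumes g: "graded N par X" and y: "y \<in> V N" and h: "\<forall>x\<in>X. bform N B x y = 0" and x: "x \<in> X"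
  shows "bform N B y x = 0"
proof -
  have xV: "x \<in> V N" using graded_subset_V[OF g] x by auto
  have "bform N B (evpart par x) y = 0" using h graded_evpart[OF g x] by blast
  then have e: "bform N B (evpart par x) (evpart par y) = 0" using bform_evpart_left[OF xV y] by simp
  have "bform N B (odpart par x) y = 0" using h graded_odpart[OF g x] by blast
  then have o: "bform N B (odpart par x) (odpart par y) = 0" using bform_odpart_left[OF xV y] by simp
  show ?thesis using bform_parity_split[OF y xV] bform_evpart_skew[OF xV y] bform_odpart_symm[OF xV y] e o by simp
qed

lemma orth_graded_right_imp_left:
  assumes g: "graded N par X" and y: "y \<in> V N" and h: "\<forall>x\<in>X. bform N B y x = 0" and x: "x \<in> X"
  shows "bform N B x y = 0"
proof -
  have xV: "x \<in> V N" using graded_subset_V[OF g] x by auto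
  have "bform N B y (evpart par x) = 0" using h graded_evpart[OF g x] by blast
  then have e: "bform N B (evpart par y) (evpart par x) = 0" using bform_evpart_right[OF y xV] by simp
  have "bform N B y (odpart par x) = 0" using h graded_odpart[OF g x] by blast
  then have o: "bform N B (odpart par y) (odpart par x) = 0" using bform_odpart_right[OF y xV] by simp
  show ?thesis using bform_parity_split[OF xV y] bform_evpart_skew[OF y xV] bform_odpart_symm[OF y xV] e o by simp
qed

lemma perp_graded: assumes g: "graded N par X" shows "graded N par (perp N B X)"
proof -
  have "evpart par v \<in> perp N B X" if v: "v \<in> perp N B X" for v
  proof -
    have vV: "v \<in> V N" using v by (simp add: perp_def)
    have "bform N B (evpart par v) u = 0" if u: "u \<in> X" for u
    proof -
      have uV: "u \<in> V N" using graded_subset_V[OF g] u by auto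
      have "bform N B v (evpart par u) = 0" using v graded_evpart[OF g u] by (simp add: perp_def)
      then show ?thesis using bform_evpart_left[OF vV uV] bform_evpart_right[OF vV uV] by simp
    qed
    then show ?thesis using V_evpart[OF vV] by (simp add: perp_def)
  qed
  then show ?thesis using perp_subsp[of N B X] by (simp add: graded_def)
qed

lemma nondeg_on_V_right:
  assumes nd: "nondeg_on N B (V N)" and y: "y \<in> V N" and h: "\<forall>x\<in>V N. bform N B x y = 0"
  shows "y = 0"
  using nd y orth_graded_left_imp_right[OF graded_V y h] unfolding nondeg_on_def vzero_eq by blast

end

lemma separating_functional_exists:
  fixes B :: "nat \<Rightarrow> nat \<Rightarrow> 'k::field"
  assumes K: "subsp N K" and Y: "vsp.subspace Y"
    and sepY: "\<forall>y\<in>Y. (\<forall>k\<in>K. bform N B k y = 0) \<longrightarrow> y = 0" and U: "finite U"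
  shows "U \<subseteq> Y \<Longrightarrow> y \<in> Y \<Longrightarrow> y \<notin> vsp.span U \<Longrightarrow> \<exists>k\<in>K. (\<forall>u\<in>U. bform N B k u = 0) \<and> bform N B k y = 1"
  using U
proof (induct U arbitrary: y rule: finite_induct)
  case empty
  then have "y \<noteq> 0" by simp
  then obtain k where k: "k \<in> K" "bform N B k y \<noteq> 0" using sepY empty by blast
  have "vsmul (inverse (bform N B k y)) k \<in> K" using subsp_smul[OF K k(1)] .
  then show ?case using k(2) by (auto simp: bform_smul_left intro!: bexI[of _ "vsmul (inverse (bform N B k y)) k"])
next
  case (insert u0 U0 y)
  have U0Y: "U0 \<subseteq> Y" and u0Y: "u0 \<in> Y" using insert by auto
  show ?case
  proof (cases "u0 \<in> vsp.span U0")
    case True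
    have "y \<notin> vsp.span U0" using insert.prems(3) vsp.span_mono[of U0 "insert u0 U0"] by auto
    then obtain k where k: "k \<in> K" "\<forall>u\<in>U0. bform N B k u = 0" "bform N B k y = 1"
      using insert(3)[OF U0Y insert.prems(2)] by blast
    have "bform N B k u0 = 0" using bform_span_zero[OF k(2) True] .
    then show ?thesis using k by auto
  next
    case False
    obtain x2 where x2: "x2 \<in> K" "\<forall>u\<in>U0. bform N B x2 u = 0" "bform N B x2 u0 = 1"
      using insert(3)[OF U0Y u0Y False] by blast
    define z where "z = y - vsmul (bform N B x2 y) u0"
    have zY: "z \<in> Y" unfolding z_def
      using vsp.subspace_diff[OF Y insert.prems(2) vsp.subspace_scale[OF Y u0Y]] by simp
    have "z \<notin> vsp.span U0"
    proof
      assume "z \<in> vsp.span U0"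
      then have "z \<in> vsp.span (insert u0 U0)" using vsp.span_mono[of U0 "insert u0 U0"] by auto
      moreover have "vsmul (bform N B x2 y) u0 \<in> vsp.span (insert u0 U0)"
        by (simp add: vsp.span_base vsp.span_scale)
      ultimately have "z + vsmul (bform N B x2 y) u0 \<in> vsp.span (insert u0 U0)" by (rule vsp.span_add)
      then show False using insert.prems(3) by (simp add: z_def)
    qed
    then obtain x3 where x3: "x3 \<in> K" "\<forall>u\<in>U0. bform N B x3 u = 0" "bform N B x3 z = 1"
      using insert(3)[OF U0Y zY] by blast
    define k where "k = x3 - vsmul (bform N B x3 u0) x2"
    have kK: "k \<in> K" unfolding k_def using subsp_add[OF K x3(1) subsp_neg[OF K subsp_smul[OF K x2(1)]]] by simp
    have "\<forall>u\<in>U0. bform N B k u = 0" using x2 x3 by (simp add: k_def bform_diff_left bform_smul_left)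
    moreover have "bform N B k u0 = 0" using x2 by (simp add: k_def bform_diff_left bform_smul_left)
    moreover have "bform N B k y = 1" using x3(3) x2(3)
      by (simp add: k_def z_def bform_diff_left bform_diff_right bform_smul_left bform_smul_right algebra_simps)
    ultimately show ?thesis using kK by auto
  qed
qed


lemma matching_functional_exists:
  fixes B :: "nat \<Rightarrow> nat \<Rightarrow> 'k::field"
  assumes K: "subsp N K" and Y: "vsp.subspace Y"
    and sepY: "\<forall>y\<in>Y. (\<forall>k\<in>K. bform N B k y = 0) \<longrightarrow> y = 0" and F: "finite F"
  shows "F \<subseteq> Y \<Longrightarrow> \<exists>k\<in>K. \<forall>u\<in>F. bform N B k u = bform N B x u"
  using F
proof (induct F rule: finite_induct)
  case empty
  then show ?case using subsp_zero[OF K] by auto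
next
  case (insert f0 F0)
  then obtain k1 where k1: "k1 \<in> K" "\<forall>u\<in>F0. bform N B k1 u = bform N B x u" by auto
  show ?case
  proof (cases "f0 \<in> vsp.span F0")
    case True
    then show ?thesis using bform_span_eq[OF k1(2) True] k1 by auto
  next
    case False
    have "\<exists>k\<in>K. (\<forall>u\<in>F0. bform N B k u = 0) \<and> bform N B k f0 = 1"
      by (rule separating_functional_exists[OF K Y sepY insert(1)]) (use insert.prems False in auto)
    then obtain k2 where k2: "k2 \<in> K" "\<forall>u\<in>F0. bform N B k2 u = 0" "bform N B k2 f0 = 1"
      by blast
    define k where "k = k1 + vsmul (bform N B x f0 - bform N B k1 f0) k2"
    have "k \<in> K" unfolding k_def by (rule subsp_add[OF K k1(1) subsp_smul[OF K k2(1)]])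
    moreover have "\<forall>u\<in>insert f0 F0. bform N B k u = bform N B x u"
    proof
      fix u assume u: "u \<in> insert f0 F0"
      have e: "bform N B k u = bform N B k1 u + (bform N B x f0 - bform N B k1 f0) * bform N B k2 u"
        unfolding k_def by (simp only: bform_add_left bform_smul_left)
      show "bform N B k u = bform N B x u"
      proof (cases "u = f0")
        case True then show ?thesis using e k2(3) by simp
      next
        case False then have "u \<in> F0" using u by simp
        then show ?thesis using e k1(2) k2(2) by simp
      qed
    qed
    ultimately show ?thesis by blast
  qed
qed


lemma nondeg_on_splus_orth_zero:
  assumes nd: "nondeg_on N B (splus U W)" and u: "u \<in> splus U W"
    and orth_U: "\<forall>x\<in>U. bform N B u x = 0" and orth_W: "\<forall>x\<in>W. bform N B u x = 0"
  shows "u = 0"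
proof -
  have "\<forall>w\<in>splus U W. bform N B u w = 0"
    using orth_U orth_W by (auto dest!: splus_memE simp: bform_add_right)
  then show ?thesis using nd u by (simp add: nondeg_on_def vzero_eq)
qed

lemma bform_perp_left: "p \<in> perp N B X \<Longrightarrow> x \<in> X \<Longrightarrow> bform N B p x = 0"
  by (simp add: perp_def)

lemma bform_perp_right:
  fixes B :: "nat \<Rightarrow> nat \<Rightarrow> 'k::field"
  assumes even: "even_form N par B" and skew: "superskew N par B"
    and X: "graded N par X" and x: "x \<in> X" and p: "p \<in> perp N B X"
  shows "bform N B x p = 0"
  using orth_graded_left_imp_right[OF even skew perp_graded[OF even skew X] _ _ p]
    graded_subset_V[OF X] x by (auto simp: perp_def)

text \<open>\<open>(X\<^sup>\<perp>)\<^sup>\<perp> \<subseteq> X\<close>; a vector outside \<open>X\<close> is separated from \<open>X\<close> by a functional \<open>(k, -)\<close>.\<close>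
lemma orth_perp_imp_mem:
  fixes B :: "nat \<Rightarrow> nat \<Rightarrow> 'k::field"
  assumes even: "even_form N par B" and skew: "superskew N par B"
    and nondeg: "nondeg_on N B (V N)" and X: "subsp N X"
    and y: "y \<in> V N" and orth: "\<forall>k\<in>perp N B X. bform N B k y = 0"
  shows "y \<in> X"
proof (rule ccontr)
  assume yX: "y \<notin> X"
  obtain F where F: "finite F" "F \<subseteq> X" "vsp.span F = X"
    using subsp_finite_spanning_set[OF X] by blast
  have sepV: "\<forall>y\<in>V N. (\<forall>k\<in>V N. bform N B k y = 0) \<longrightarrow> y = 0"
    using nondeg_on_V_right[OF even skew nondeg] by blast
  obtain k where k: "k \<in> V N" "\<forall>u\<in>F. bform N B k u = 0" "bform N B k y = 1"
    using separating_functional_exists[OF subsp_V subsp_imp_subspace[OF subsp_V] sepV F(1)]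
      F(2,3) subsp_subset_V[OF X] y yX by blast
  have "k \<in> perp N B X" using bform_span_zero[OF k(2)] F(3) k(1) by (auto simp: perp_def)
  then show False using orth k(3) by simp
qed

section \<open>Ideals and their orthogonal complements\<close>

definition homogeneous :: "nat \<Rightarrow> (nat \<Rightarrow> bool) \<Rightarrow> 'k::comm_ring_1 vec \<Rightarrow> bool" where
  "homogeneous N par v \<longleftrightarrow> (\<exists>p. homog N par p v)"

lemma homogeneous_evpart: "v \<in> V N \<Longrightarrow> homogeneous N par (evpart par v)"
  using homog_evpart by (auto simp: homogeneous_def)
lemma homogeneous_odpart: "v \<in> V N \<Longrightarrow> homogeneous N par (odpart par v)"
  using homog_odpart by (auto simp: homogeneous_def)
lemma homogeneous_V: "homogeneous N par v \<Longrightarrow> v \<in> V N"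
  by (auto simp: homogeneous_def homog_def)

lemma homogeneous_split_induct[consumes 2, case_names base split]:
  fixes Q :: "'k::comm_ring_1 vec list \<Rightarrow> bool"
  assumes as: "length as = n" "set as \<subseteq> V N"
    and base: "\<And>as. length as = n \<Longrightarrow> \<forall>x\<in>set as. homogeneous N par x \<Longrightarrow> Q as"
    and split: "\<And>as k. length as = n \<Longrightarrow> set as \<subseteq> V N \<Longrightarrow> k < n \<Longrightarrow>
        Q (as[k := evpart par (as ! k)]) \<Longrightarrow> Q (as[k := odpart par (as ! k)]) \<Longrightarrow> Q as"
  shows "Q as"
proof -
  have "Q as" if "length as = n" "set as \<subseteq> V N" "\<forall>i. j \<le> i \<and> i < n \<longrightarrow> homogeneous N par (as ! i)"
    for j and as :: "'k vec list"
    using that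
  proof (induction j arbitrary: as)
    case 0
    then show ?case using base by (metis in_set_conv_nth zero_le)
  next
    case (Suc j)
    show ?case
    proof (cases "j < n")
      case False
      then show ?thesis using Suc.IH Suc.prems by auto
    next
      case True
      have aj: "as ! j \<in> V N" using Suc.prems True nth_mem by blast
      have upd: "Q (as[j := f (as ! j)])" if "f (as ! j) \<in> V N" "homogeneous N par (f (as ! j))" for f
      proof (rule Suc.IH)
        show "set (as[j := f (as ! j)]) \<subseteq> V N"
          by (rule set_update_subsetI) (use Suc.prems that in auto)
      qed (use Suc.prems that in \<open>auto simp: nth_list_update\<close>)
      show ?thesis
        by (rule split[OF Suc.prems(1,2) True upd[of "evpart par"] upd[of "odpart par"]])
          (use aj V_evpart V_odpart homogeneous_evpart homogeneous_odpart in auto)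
    qed
  qed
  moreover have "\<forall>i. n \<le> i \<and> i < n \<longrightarrow> homogeneous N par (as ! i)" by auto
  ultimately show ?thesis using as by blast
qed

lemma op_parity_split:
  assumes ml: "multilinear N n op" and as: "length as = n" "set as \<subseteq> V N" and k: "k < n"
  shows "op as = op (as[k := evpart par (as ! k)]) + op (as[k := odpart par (as ! k)])"
proof -
  have akV: "as ! k \<in> V N" using as k nth_mem by blast
  have "op (as[k := vadd (evpart par (as ! k)) (odpart par (as ! k))]) =
      vadd (op (as[k := evpart par (as ! k)])) (op (as[k := odpart par (as ! k)]))"
    using ml[unfolded multilinear_def, THEN conjunct2, rule_format, of as k _ _ 1]
      as k V_evpart[OF akV] V_odpart[OF akV] by blast
  then show ?thesis by (simp only: vadd_eq evpart_add_odpart list_update_id)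
qed

lemma op_swap_adjacent:
  assumes cm: "commutative N par n op"
    and l: "length (ys @ y # z # zs) = n" and s: "set (ys @ y # z # zs) \<subseteq> V N"
    and hy: "homogeneous N par y" and hz: "homogeneous N par z"
  shows "\<exists>c. op (ys @ y # z # zs) = vsmul c (op (ys @ z # y # zs))"
proof -
  obtain p q where p: "homog N par p y" and q: "homog N par q z" using hy hz by (auto simp: homogeneous_def)
  let ?as = "ys @ y # z # zs" and ?k = "length ys"
  have "?as ! ?k = y" "?as ! Suc ?k = z" by (simp_all add: nth_append)
  moreover have "?as[?k := ?as ! Suc ?k, Suc ?k := ?as ! ?k] = ys @ z # y # zs"
    by (simp add: nth_append list_update_append)
  moreover have "Suc ?k < n" using l by simp
  ultimately have "op ?as = vsmul (sgn2 (p \<and> q)) (op (ys @ z # y # zs))"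
    using cm[unfolded commutative_def, rule_format, of ?as ?k p q] l s p q by simp
  then show ?thesis by blast
qed

lemma op_move_to_front:
  assumes cm: "commutative N par n op"
  shows "length (ys @ z # zs) = n \<Longrightarrow> set (ys @ z # zs) \<subseteq> V N \<Longrightarrow>
    \<forall>x\<in>set (ys @ z # zs). homogeneous N par x \<Longrightarrow> \<exists>c. op (ys @ z # zs) = vsmul c (op (z # ys @ zs))"
proof (induction ys arbitrary: zs rule: rev_induct)
  case Nil
  show ?case by (rule exI[of _ 1]) (simp add: vsmul_one)
next
  case (snoc y ys)
  obtain c1 where "op (ys @ y # z # zs) = vsmul c1 (op (ys @ z # y # zs))"
    using op_swap_adjacent[OF cm, of ys y z zs] snoc.prems by auto
  moreover obtain c2 where "op (ys @ z # y # zs) = vsmul c2 (op (z # ys @ y # zs))"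
    using snoc.IH[of "y # zs"] snoc.prems by auto
  ultimately show ?case by (auto simp: vsmul_vsmul)
qed

lemma op_move_from_front:
  assumes cm: "commutative N par n op"
  shows "length (ys @ z # zs) = n \<Longrightarrow> set (ys @ z # zs) \<subseteq> V N \<Longrightarrow>
    \<forall>x\<in>set (ys @ z # zs). homogeneous N par x \<Longrightarrow> \<exists>c. op (z # ys @ zs) = vsmul c (op (ys @ z # zs))"
proof (induction ys arbitrary: zs rule: rev_induct)
  case Nil
  show ?case by (rule exI[of _ 1]) (simp add: vsmul_one)
next
  case (snoc y ys)
  obtain c1 where "op (z # ys @ y # zs) = vsmul c1 (op (ys @ z # y # zs))"
    using snoc.IH[of "y # zs"] snoc.prems by auto
  moreover obtain c2 where "op (ys @ z # y # zs) = vsmul c2 (op (ys @ y # z # zs))"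
    using op_swap_adjacent[OF cm, of ys z y zs] snoc.prems by auto
  ultimately show ?case by (auto simp: vsmul_vsmul)
qed

text \<open>Move \<open>p\<close> to the front, apply invariance to exchange it with \<open>y\<close>, and move \<open>y\<close> back to the
  end, where the ideal property applies.\<close>
lemma bform_op_perp_last_homog:
  fixes B :: "nat \<Rightarrow> nat \<Rightarrow> 'k::field"
  assumes cm: "commutative N par n op" and inv: "invariant N par B n op"
    and I: "ideal N par n op I"
    and as: "length (rest @ [p]) = n" "\<forall>x\<in>set (rest @ [p]). homogeneous N par x"
    and p: "p \<in> perp N B I" and y: "homog N par q y" "y \<in> I"
  shows "bform N B y (op (rest @ [p])) = 0"
proof -
  have yV: "y \<in> V N" using y by (simp add: homog_def)
  have sV: "set (rest @ [p]) \<subseteq> V N" using as homogeneous_V by blast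
  obtain pp where pp: "homog N par pp p" using as by (auto simp: homogeneous_def)
  obtain c1 where c1: "op (rest @ [p]) = vsmul c1 (op (p # rest))"
    using op_move_to_front[OF cm, of rest p "[]"] as sV by auto
  have hy: "\<forall>x\<in>set (rest @ [y]). homogeneous N par x" using as y by (auto simp: homogeneous_def)
  obtain c2 where c2: "op (y # rest) = vsmul c2 (op (rest @ [y]))"
    using op_move_from_front[OF cm, of rest y "[]"] as sV yV hy by auto
  have "op (rest @ [y]) \<in> I"
    using I[unfolded ideal_def, THEN conjunct2, rule_format, of "rest @ [y]"] as sV yV y(2) by simp
  then have "bform N B p (op (y # rest)) = 0" using p c2 by (simp add: perp_def bform_smul_right)
  moreover have "bform N B y (op (p # rest)) = sgn2 (q \<and> pp) * bform N B p (op (y # rest))"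
    by (rule inv[unfolded invariant_def, rule_format]) (use y(1) pp as sV in simp)
  ultimately show ?thesis using c1 by (simp add: bform_smul_right)
qed

lemma last_list_update_parts:
  assumes X: "graded N par X" and last: "last as \<in> X" and k: "k < length as"
  shows "last (as[k := evpart par (as ! k)]) \<in> X" "last (as[k := odpart par (as ! k)]) \<in> X"
proof -
  have ne: "as \<noteq> []" using k by auto
  have "last (as[k := f (as ! k)]) = (if k = length as - 1 then f (last as) else last as)" for f
    using ne k by (simp add: last_conv_nth nth_list_update)
  then show "last (as[k := evpart par (as ! k)]) \<in> X" "last (as[k := odpart par (as ! k)]) \<in> X"
    using last graded_evpart[OF X] graded_odpart[OF X] by simp_all
qed

lemma bform_op_perp_last:
  fixes B :: "nat \<Rightarrow> nat \<Rightarrow> 'k::field"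
  assumes even: "even_form N par B" and skew: "superskew N par B"
    and ml: "multilinear N n op" and cm: "commutative N par n op" and inv: "invariant N par B n op"
    and I: "ideal N par n op I" and n1: "1 \<le> n"
    and as: "length as = n" "set as \<subseteq> V N"
  shows "last as \<in> perp N B I \<longrightarrow> (\<forall>x\<in>I. bform N B x (op as) = 0)"
  using as
proof (induction rule: homogeneous_split_induct[where par = par])
  case (base as)
  have gI: "graded N par I" using I by (simp add: ideal_def)
  show ?case
  proof (intro impI ballI)
    fix x assume p: "last as \<in> perp N B I" and x: "x \<in> I"
    obtain rest p0 where as: "as = rest @ [p0]" using base(1) n1
      by (metis append_butlast_last_id le_numeral_extra(2) length_0_conv)
    have xV: "x \<in> V N" using x graded_subset_V[OF gI] by blast
    have "bform N B (evpart par x) (op as) = 0" "bform N B (odpart par x) (op as) = 0"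
      using bform_op_perp_last_homog[OF cm inv I, of rest p0] base p as
        homog_evpart[OF xV] homog_odpart[OF xV] graded_evpart[OF gI x] graded_odpart[OF gI x] by auto
    then show "bform N B x (op as) = 0"
      using bform_add_left[of N B "evpart par x" "odpart par x" "op as"] by (simp add: evpart_add_odpart)
  qed
next
  case (split as k)
  have gP: "graded N par (perp N B I)"
    using I perp_graded[OF even skew] by (simp add: ideal_def)
  show ?case
  proof (intro impI ballI)
    fix x assume last: "last as \<in> perp N B I" and x: "x \<in> I"
    have "k < length as" using split(1,3) by simp
    then have "bform N B x (op (as[k := evpart par (as ! k)])) = 0"
        "bform N B x (op (as[k := odpart par (as ! k)])) = 0"
      using split(4,5) last_list_update_parts[OF gP last] x by blast+
    then show "bform N B x (op as) = 0"
      using op_parity_split[OF ml split(1-3), of par] by (simp add: bform_add_right)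
  qed
qed

lemma ideal_perp:
  fixes B :: "nat \<Rightarrow> nat \<Rightarrow> 'k::field"
  assumes even: "even_form N par B" and skew: "superskew N par B"
    and ml: "multilinear N n op" and cm: "commutative N par n op" and inv: "invariant N par B n op"
    and I: "ideal N par n op I" and n1: "1 \<le> n"
  shows "ideal N par n op (perp N B I)"
proof -
  have gI: "graded N par I" using I by (simp add: ideal_def)
  have "op as \<in> perp N B I" if as: "length as = n" "set as \<subseteq> V N" "last as \<in> perp N B I" for as
  proof -
    have opV: "op as \<in> V N" using ml as by (simp add: multilinear_def)
    have "\<forall>x\<in>I. bform N B x (op as) = 0"
      using bform_op_perp_last[OF even skew ml cm inv I n1 as(1,2)] as(3) by blast
    then show ?thesis
      using orth_graded_left_imp_right[OF even skew gI opV] opV by (simp add: perp_def)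
  qed
  then show ?thesis using perp_graded[OF even skew gI] by (simp add: ideal_def)
qed

lemma ideal_splus:
  assumes I: "ideal N par n op (I :: 'k::comm_ring_1 vec set)" and P: "ideal N par n op P"
    and n1: "1 \<le> n" and ml: "multilinear N n op"
  shows "ideal N par n op (splus I P)"
proof -
  have gI: "graded N par I" and gP: "graded N par P" using I P by (auto simp: ideal_def)
  have sI: "subsp N I" and sP: "subsp N P" using gI gP by (auto simp: graded_def)
  have "op as \<in> splus I P" if l: "length as = n" and s: "set as \<subseteq> V N" and la: "last as \<in> splus I P" for as
  proof -
    obtain i p where ip: "last as = i + p" "i \<in> I" "p \<in> P" using splus_memE[OF la] by blast
    have iV: "i \<in> V N" and pV: "p \<in> V N" using ip sI sP by (auto simp: subsp_def)
    have ne: "as \<noteq> []" using l n1 by auto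
    let ?k = "n - 1"
    have lastn: "last as = as ! ?k" using ne l by (simp add: last_conv_nth)
    have k: "?k < n" using n1 by simp
    have "op (as[?k := vadd i p]) = vadd (op (as[?k := i])) (op (as[?k := p]))"
      using ml[unfolded multilinear_def, THEN conjunct2, rule_format, of as ?k i p 1] l s k iV pV by blast
    moreover have "as[?k := vadd i p] = as" using lastn ip by (simp add: vadd_eq)
    ultimately have e: "op as = op (as[?k := i]) + op (as[?k := p])" by (simp add: vadd_eq)
    have lsi: "last (as[?k := i]) = i" "last (as[?k := p]) = p" using ne l n1 by (simp_all add: last_conv_nth)
    have s1: "set (as[?k := i]) \<subseteq> V N" by (rule set_update_subsetI) (use s iV in auto)
    have s2: "set (as[?k := p]) \<subseteq> V N" by (rule set_update_subsetI) (use s pV in auto)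
    have "op (as[?k := i]) \<in> I"
      by (rule I[unfolded ideal_def, THEN conjunct2, rule_format]) (use l s1 ip lsi in simp)
    moreover have "op (as[?k := p]) \<in> P"
      by (rule P[unfolded ideal_def, THEN conjunct2, rule_format]) (use l s2 ip lsi in simp)
    ultimately show ?thesis using e splus_mem by simp
  qed
  then show ?thesis using graded_splus[OF gI gP] by (simp add: ideal_def)
qed


lemma not_irreducible_if_splus_perp_eq_V:
  fixes B :: "nat \<Rightarrow> nat \<Rightarrow> 'k::field"
  assumes even: "even_form N par B" and skew: "superskew N par B"
    and nondeg: "nondeg_on N B (V N)"
    and I: "nontrivial_ideal N par n op I" and P: "ideal N par n op (perp N B I)"
    and sum: "splus I (perp N B I) = V N"
  shows "\<not> irreducible N par B n op"
proof -
  let ?P = "perp N B I"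
  have gI: "graded N par I" using I by (simp add: nontrivial_ideal_def ideal_def)
  have sP: "subsp N ?P" using P by (simp add: ideal_def graded_def)
  have orth_zero: "y = 0"
    if "y \<in> V N" "\<forall>x\<in>I. bform N B y x = 0" "\<forall>p\<in>?P. bform N B y p = 0" for y
    using nondeg_on_splus_orth_zero[of N B I ?P y] nondeg that sum by simp
  have "?P \<noteq> {vzero}"
  proof
    assume "?P = {vzero}"
    then have "splus I ?P = I" by (auto simp: splus_def vadd_eq vzero_eq)
    then show False using I sum by (simp add: nontrivial_ideal_def)
  qed
  moreover have "I \<inter> ?P = {vzero}"
  proof -
    have "x = 0" if "x \<in> I" "x \<in> ?P" for x
      using orth_zero[of x] that bform_perp_left[of x N B I] bform_perp_right[OF even skew gI]
        graded_subset_V[OF gI] by blast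
    then show ?thesis
      using subsp_zero[OF graded_subsp[OF gI]] subsp_zero[OF sP] by (auto simp: vzero_eq)
  qed
  moreover have "nondeg_on N B I"
    unfolding nondeg_on_def vzero_eq
    using orth_zero bform_perp_right[OF even skew gI] graded_subset_V[OF gI] by blast
  moreover have "nondeg_on N B ?P"
    unfolding nondeg_on_def vzero_eq
    using orth_zero bform_perp_left[of _ N B I] subsp_subset_V[OF sP] by blast
  ultimately show ?thesis
    using I P sum unfolding irreducible_def nontrivial_ideal_def by blast
qed

lemma perp_subset_maximal_ideal:
  fixes B :: "nat \<Rightarrow> nat \<Rightarrow> 'k::field"
  assumes even: "even_form N par B" and skew: "superskew N par B"
    and nondeg: "nondeg_on N B (V N)"
    and ml: "multilinear N n op" and cm: "commutative N par n op" and inv: "invariant N par B n op"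
    and n1: "1 \<le> n" and irred: "irreducible N par B n op"
    and I_max: "maximal_nontrivial_ideal N par n op I"
  shows "perp N B I \<subseteq> I"
proof -
  have I: "nontrivial_ideal N par n op I" using I_max by (simp add: maximal_nontrivial_ideal_def)
  then have Iid: "ideal N par n op I" by (simp add: nontrivial_ideal_def)
  have P: "ideal N par n op (perp N B I)" by (rule ideal_perp[OF even skew ml cm inv Iid n1])
  let ?J = "splus I (perp N B I)"
  have sI: "subsp N I" and sP: "subsp N (perp N B I)"
    using Iid P by (simp_all add: ideal_def graded_def)
  have IJ: "I \<subseteq> ?J" and PJ: "perp N B I \<subseteq> ?J"
    using splus_upper_left[OF sP] splus_upper_right[OF sI] by auto
  have "?J \<noteq> V N"
    using not_irreducible_if_splus_perp_eq_V[OF even skew nondeg I P] irred by blast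
  moreover have "?J \<noteq> {vzero}" using I IJ subsp_zero[OF sI] by (auto simp: nontrivial_ideal_def vzero_eq)
  ultimately have "nontrivial_ideal N par n op ?J"
    using ideal_splus[OF Iid P n1 ml] by (simp add: nontrivial_ideal_def)
  then have "I = ?J" using I_max IJ by (auto simp: maximal_nontrivial_ideal_def)
  then show ?thesis using PJ by simp
qed

lemma perp_splus_perp_subset:
  fixes B :: "nat \<Rightarrow> nat \<Rightarrow> 'k::field"
  assumes even: "even_form N par B" and skew: "superskew N par B"
    and nondeg: "nondeg_on N B (V N)" and I: "graded N par I" and H: "subsp N H"
  shows "perp N B (splus (perp N B I) H) \<subseteq> I"
proof
  fix g assume g: "g \<in> perp N B (splus (perp N B I) H)"
  then have gV: "g \<in> V N" by (simp add: perp_def)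
  have "\<forall>k\<in>perp N B I. bform N B g k = 0"
    using bform_perp_left[OF g] splus_upper_left[OF H] by blast
  then have "\<forall>k\<in>perp N B I. bform N B k g = 0"
    using orth_graded_right_imp_left[OF even skew perp_graded[OF even skew I] gV] by blast
  then show "g \<in> I" by (rule orth_perp_imp_mem[OF even skew nondeg graded_subsp[OF I] gV])
qed

lemma inj_on_coset_perp_splus:
  assumes nd: "nondeg_on N B (splus H P)" and P: "subsp N P" and H: "subsp N H"
  shows "inj_on (coset P) (perp N B (splus P H))"
proof
  fix g1 g2 assume g: "g1 \<in> perp N B (splus P H)" "g2 \<in> perp N B (splus P H)"
    and e: "coset P g1 = coset P g2"
  have "g1 - g2 \<in> perp N B (splus P H)" by (rule subsp_diff[OF perp_subsp g])
  then have "\<forall>x\<in>H. bform N B (g1 - g2) x = 0" "\<forall>x\<in>P. bform N B (g1 - g2) x = 0"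
    using bform_perp_left splus_upper_left[OF H] splus_upper_right[OF P] by blast+
  moreover have "g1 - g2 \<in> splus H P"
    using coset_eq_imp_diff_mem[OF P e] splus_upper_right[OF H] by blast
  ultimately have "g1 - g2 = 0" using nondeg_on_splus_orth_zero[OF nd] by blast
  then show "g1 = g2" by simp
qed

lemma perp_separates_isotropic:
  fixes B :: "nat \<Rightarrow> nat \<Rightarrow> 'k::field"
  assumes even: "even_form N par B" and skew: "superskew N par B"
    and P: "graded N par P" and H: "graded N par H" and iso: "isotropic N B H"
    and nd: "nondeg_on N B (splus H P)"
    and h: "h \<in> H" and orth: "\<forall>k\<in>P. bform N B k h = 0"
  shows "h = 0"
proof (rule nondeg_on_splus_orth_zero[OF nd])
  have hV: "h \<in> V N" using h graded_subset_V[OF H] by blast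
  show "h \<in> splus H P" using h splus_upper_left[OF graded_subsp[OF P]] by blast
  show "\<forall>x\<in>H. bform N B h x = 0" using iso h by (simp add: isotropic_def)
  show "\<forall>x\<in>P. bform N B h x = 0"
    using orth_graded_left_imp_right[OF even skew P hV orth] by blast
qed

text \<open>Given \<open>x \<in> I\<close>, choose \<open>p \<in> P\<close> with the same pairing as \<open>x\<close> against \<open>H\<close>; then \<open>x - p \<in> G\<close>.\<close>
lemma coset_perp_image:
  fixes B :: "nat \<Rightarrow> nat \<Rightarrow> 'k::field"
  assumes even: "even_form N par B" and skew: "superskew N par B"
    and I: "graded N par I" and P: "P = perp N B I" and PI: "P \<subseteq> I"
    and H: "graded N par H" and iso: "isotropic N B H" and nd: "nondeg_on N B (splus H P)"
    and G: "G = perp N B (splus P H)" and GI: "G \<subseteq> I"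
  shows "coset P ` G = quot I P"
proof
  show "coset P ` G \<subseteq> quot I P" using GI by (auto simp: quot_def)
next
  have gP: "graded N par P" unfolding P by (rule perp_graded[OF even skew I])
  have sP: "subsp N P" and sH: "subsp N H" using gP H by (simp_all add: graded_subsp)
  show "quot I P \<subseteq> coset P ` G"
  proof
    fix c assume "c \<in> quot I P"
    then obtain x where x: "x \<in> I" "c = coset P x" by (auto simp: quot_def)
    obtain F where F: "finite F" "F \<subseteq> H" "vsp.span F = H"
      using subsp_finite_spanning_set[OF sH] by blast
    obtain p where p: "p \<in> P" "\<forall>u\<in>F. bform N B p u = bform N B x u"
      using matching_functional_exists[OF sP subsp_imp_subspace[OF sH] _ F(1) F(2)]
        perp_separates_isotropic[OF even skew gP H iso nd] by blast
    have pH: "\<forall>u\<in>H. bform N B p u = bform N B x u" using bform_span_eq[OF p(2)] F(3) by blast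
    have orth_P: "bform N B y q = 0" if "y \<in> I" "q \<in> P" for y q
      using bform_perp_right[OF even skew I] that P by blast
    have "x \<in> V N" "p \<in> V N" using x p PI graded_subset_V[OF I] by blast+
    then have "x - p \<in> V N" by (simp add: V_def)
    moreover have "\<forall>w\<in>splus P H. bform N B (x - p) w = 0"
      using orth_P[OF x(1)] orth_P[of p] p(1) PI pH
      by (auto dest!: splus_memE simp: bform_add_right bform_diff_left)
    ultimately have "x - p \<in> G" by (simp add: G perp_def)
    moreover have "c = coset P (x - p)"
      using coset_add_member[OF sP p(1), of "x - p"] x(2) by simp
    ultimately show "c \<in> coset P ` G" by blast
  qed
qed

section \<open>The super-symmetric algebra and the derived bracket\<close>

definition mon_dec :: "mon \<Rightarrow> nat \<Rightarrow> mon" where "mon_dec m k = (\<lambda>i. m i - unitm k i)"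
text \<open>\<open>xmul par k\<close> is left multiplication by the generator \<open>x\<^sub>k\<close> in ordered-monomial
  coordinates, including the sign of moving \<open>x\<^sub>k\<close> into place.\<close>
definition xmul :: "(nat \<Rightarrow> bool) \<Rightarrow> nat \<Rightarrow> ('k::comm_ring_1) spoly \<Rightarrow> 'k spoly" where
  "xmul par k f = (\<lambda>m. if 0 < m k then msgn par (unitm k) (mon_dec m k) * f (mon_dec m k) else 0)"
definition supported :: "nat \<Rightarrow> (nat \<Rightarrow> bool) \<Rightarrow> ('k::zero) spoly \<Rightarrow> bool" where
  "supported N par f \<longleftrightarrow> (\<forall>m. f m \<noteq> 0 \<longrightarrow> valid_mon N par m)"
definition odd_count :: "(nat \<Rightarrow> bool) \<Rightarrow> nat \<Rightarrow> mon \<Rightarrow> nat" where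
  "odd_count par k n = card {j. j < k \<and> par j \<and> 0 < n j}"
definition pder_sign :: "(nat \<Rightarrow> bool) \<Rightarrow> nat \<Rightarrow> mon \<Rightarrow> 'k::comm_ring_1" where
  "pder_sign par j m = (if par j then (-1) ^ (\<Sum>i<j. if par i then m i else 0) else 1)"

lemma pder_eq_sign: "pder par j f m = pder_sign par j m * of_nat (m j + 1) * f (m(j := m j + 1))"
  by (simp add: pder_def pder_sign_def)

lemma unitm_pos: "(0 < unitm k i) = (i = k)" by (simp add: unitm_def)

lemma msgn_unit: "msgn par (unitm k) n =
  (if par k then (if 0 < n k then 0 else (-1) ^ odd_count par k n) else (1::'k::ring_1))"
proof -
  have ex: "(\<exists>i. par i \<and> 0 < unitm k i \<and> 0 < n i) = (par k \<and> 0 < n k)"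
    by (auto simp: unitm_pos)
  have st: "{(i,j). par i \<and> par j \<and> j < i \<and> 0 < unitm k i \<and> 0 < n j} =
    (if par k then (\<lambda>j. (k,j)) ` {j. j < k \<and> par j \<and> 0 < n j} else {})"
    by (auto simp: unitm_pos)
  have c: "card ((\<lambda>j. (k,j)) ` {j. j < k \<and> par j \<and> 0 < n j}) = odd_count par k n"
    unfolding odd_count_def by (rule card_image) (auto simp: inj_on_def)
  show ?thesis unfolding msgn_def ex st using c by auto
qed

lemma sum_odd_exponents_eq_odd_count:
  assumes v: "valid_mon N par m"
  shows "(\<Sum>i<j. if par i then m i else 0) = odd_count par j m"
proof -
  have "(\<Sum>i<j. if par i then m i else 0) = (\<Sum>i<j. if par i \<and> 0 < m i then 1 else 0)"
  proof (rule sum.cong)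
    fix i assume "i \<in> {..<j}"
    show "(if par i then m i else 0) = (if par i \<and> 0 < m i then 1 else 0)"
      using v unfolding valid_mon_def by (cases "par i"; cases "m i") auto
  qed simp
  also have "\<dots> = sum (\<lambda>x. 1) {i \<in> {..<j}. par i \<and> 0 < m i}"
    by (rule sum.inter_filter[symmetric]) simp
  also have "\<dots> = card {i \<in> {..<j}. par i \<and> 0 < m i}"
    by (rule card_eq_sum[symmetric])
  also have "\<dots> = odd_count par j m" unfolding odd_count_def
    by (rule arg_cong[where f=card]) auto
  finally show ?thesis .
qed

lemma valid_mon_dec: "valid_mon N par m \<Longrightarrow> valid_mon N par (mon_dec m k)"
  unfolding valid_mon_def mon_dec_def by (auto intro: le_trans[OF diff_le_self])

lemma valid_mon_upd: "valid_mon N par (m(j := v)) \<Longrightarrow> m j \<le> v \<Longrightarrow> valid_mon N par m"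
  unfolding valid_mon_def
  by (metis fun_upd_apply le_antisym le_trans nat_le_linear le_zero_eq)

lemma pder_sign_msgn_unit:
  assumes v: "valid_mon N par n" and p: "par j" and z: "\<not> 0 < n j"
  shows "pder_sign par j n * msgn par (unitm j) n = (1::'k::comm_ring_1)"
proof -
  have "pder_sign par j n = ((-1::'k) ^ odd_count par j n)" using sum_odd_exponents_eq_odd_count[OF v] p by (simp add: pder_sign_def)
  then show ?thesis using p z by (simp add: msgn_unit power_add[symmetric] flip: power_mult_distrib)
qed


lemma mon_dec_upd_same: "mon_dec (m(j := m j + 1)) j = m"
  by (simp add: mon_dec_def unitm_def fun_eq_iff)
lemma mon_dec_upd_Suc: "mon_dec (m(j := Suc (m j))) j = m"
  by (simp add: mon_dec_def unitm_def fun_eq_iff)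
lemma mon_dec_upd_back: "0 < m j \<Longrightarrow> (mon_dec m j)(j := mon_dec m j j + 1) = m"
  by (simp add: mon_dec_def unitm_def fun_eq_iff)
lemma mon_dec_same: "0 < m j \<Longrightarrow> mon_dec m j j + 1 = m j"
  by (simp add: mon_dec_def unitm_def)
lemma mon_dec_upd_other: "k \<noteq> j \<Longrightarrow> mon_dec (m(j := v)) k = (mon_dec m k)(j := v)"
  by (simp add: mon_dec_def unitm_def fun_eq_iff)
lemma mon_dec_other: "k \<noteq> j \<Longrightarrow> mon_dec m k j = m j"
  by (simp add: mon_dec_def unitm_def)

lemma sum_odd_exponents_mon_dec:
  assumes "0 < m k"
  shows "(\<Sum>i<j. if par i then m i else 0) =
    (\<Sum>i<j. if par i then mon_dec m k i else 0) + (if k < j \<and> par k then 1 else 0)"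
proof -
  have "(\<Sum>i<j. if par i then m i else 0) =
      (\<Sum>i<j. (if par i then mon_dec m k i else 0) + (if i = k \<and> par k then 1 else 0))"
    by (rule sum.cong) (use assms in \<open>auto simp: mon_dec_def unitm_def\<close>)
  also have "\<dots> = (\<Sum>i<j. if par i then mon_dec m k i else 0) + (\<Sum>i<j. if i = k \<and> par k then 1 else 0)"
    by (rule sum.distrib)
  also have "(\<Sum>i<j. if i = k \<and> par k then (1::nat) else 0) = (if k < j \<and> par k then 1 else 0)"
    by (cases "par k") (auto simp: sum.delta')
  finally show ?thesis .
qed

lemma odd_count_upd:
  assumes "j \<noteq> k" "0 < v" "par j \<longrightarrow> n j = 0"
  shows "odd_count par k (n(j := v)) = odd_count par k n + (if j < k \<and> par j then 1 else 0)"
proof -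
  let ?S = "{i. i < k \<and> par i \<and> 0 < n i}"
  have fin: "finite ?S" by (rule finite_subset[of _ "{..<k}"]) auto
  show ?thesis
  proof (cases "j < k \<and> par j")
    case True
    then have "{i. i < k \<and> par i \<and> 0 < (n(j := v)) i} = insert j ?S" using assms by auto
    moreover have "j \<notin> ?S" using assms True by auto
    ultimately show ?thesis using True fin by (simp add: odd_count_def)
  next
    case False
    then have "{i. i < k \<and> par i \<and> 0 < (n(j := v)) i} = ?S" using assms by auto
    then show ?thesis using False by (simp add: odd_count_def)
  qed
qed

lemma xmul_pder_same:
  "xmul par j (pder par j f) m = (if 0 < m j then msgn par (unitm j) (mon_dec m j) *
      (pder_sign par j (mon_dec m j) * of_nat (m j) * f m) else (0::'k::comm_ring_1))"
proof (cases "0 < m j")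
  case True
  have e2: "mon_dec m j j + 1 = m j" using mon_dec_same[of m j] True by simp
  have e3: "(mon_dec m j)(j := m j) = m" using mon_dec_upd_back[of m j] True e2 by simp
  show ?thesis unfolding xmul_def pder_eq_sign e2 e3 using True by simp
next
  case False then show ?thesis by (simp add: xmul_def)
qed

lemma pder_xmul_same:
  fixes f :: "'k::comm_ring_1 spoly"
  assumes g: "supported N par f"
  shows "pder par j (xmul par j f) m = f m + (if par j then -1 else 1) * xmul par j (pder par j f) m"
proof -
  have L: "pder par j (xmul par j f) m = pder_sign par j m * of_nat (m j + 1) * (msgn par (unitm j) m * f m)"
    unfolding pder_eq_sign xmul_def by (simp add: mon_dec_upd_same mon_dec_upd_Suc)
  note R = xmul_pder_same[of par j f m]
  show ?thesis
  proof (cases "par j")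
    case False
    then show ?thesis using L R by (simp add: pder_sign_def msgn_unit algebra_simps)
  next
    case pj: True
    show ?thesis
    proof (cases "f m = 0")
      case True then show ?thesis using L R by simp
    next
      case False
      then have v: "valid_mon N par m" using g by (simp add: supported_def)
      then have le: "m j \<le> 1" using pj by (simp add: valid_mon_def)
      show ?thesis
      proof (cases "m j = 0")
        case True
        have "pder_sign par j m * msgn par (unitm j) m = (1::'k)" using pder_sign_msgn_unit[OF v pj] True by simp
        then show ?thesis using L R pj True by (simp add: algebra_simps)
      next
        case False
        then have mj: "m j = 1" using le by simp
        have vs: "valid_mon N par (mon_dec m j)" using valid_mon_dec[OF v] .
        have z: "\<not> 0 < mon_dec m j j" using mj by (simp add: mon_dec_def unitm_def)
        have "pder_sign par j (mon_dec m j) * msgn par (unitm j) (mon_dec m j) = (1::'k)" using pder_sign_msgn_unit[OF vs pj z] .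
        moreover have "msgn par (unitm j) m = (0::'k)" using pj mj by (simp add: msgn_unit)
        ultimately show ?thesis using L R pj mj by (simp add: algebra_simps)
      qed
    qed
  qed
qed

lemma pder_sign_mul_msgn_upd:
  assumes kj: "k \<noteq> j" and mk: "0 < m k" and nj: "par j \<longrightarrow> mon_dec m k j = 0"
  shows "pder_sign par j m * msgn par (unitm k) ((mon_dec m k)(j := m j + 1)) =
    (if par k \<and> par j then -1 else 1) * (msgn par (unitm k) (mon_dec m k) * (pder_sign par j (mon_dec m k) :: 'k::comm_ring_1))"
proof -
  let ?n = "mon_dec m k" and ?v = "m j + 1"
  have nk: "(?n(j := ?v)) k = mon_dec m k k" using kj by simp
  have sm: "(\<Sum>i<j. if par i then m i else 0) =
      (\<Sum>i<j. if par i then ?n i else 0) + (if k < j \<and> par k then 1 else 0)"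
    using sum_odd_exponents_mon_dec[where m=m and k=k and j=j and par=par] mk by simp
  have cu: "odd_count par k (?n(j := ?v)) = odd_count par k ?n + (if j < k \<and> par j then 1 else 0)"
    using odd_count_upd[of j k ?v par ?n] kj nj by auto
  show ?thesis
  proof (cases "par k")
    case False then show ?thesis by (simp add: msgn_unit pder_sign_def sm)
  next
    case pk: True
    show ?thesis
    proof (cases "0 < ?n k")
      case True then show ?thesis using pk nk by (simp add: msgn_unit)
    next
      case False
      then have nk0: "\<not> 0 < (?n(j := ?v)) k" using nk by simp
      show ?thesis
      proof (cases "par j")
        case pj: True
        have "k < j \<or> j < k" using kj by arith
        then show ?thesis using pk pj False nk0 cu sm
          by (auto simp: msgn_unit pder_sign_def power_add)
      next
        case False then show ?thesis using pk nk0 cu sm \<open>\<not> 0 < ?n k\<close>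
          by (simp add: msgn_unit pder_sign_def)
      qed
    qed
  qed
qed

lemma pder_xmul_other:
  fixes f :: "'k::comm_ring_1 spoly"
  assumes g: "supported N par f" and kj: "k \<noteq> j"
  shows "pder par j (xmul par k f) m = (if par k \<and> par j then -1 else 1) * xmul par k (pder par j f) m"
proof -
  let ?n = "mon_dec m k"
  let ?v = "m j + 1"
  have L: "pder par j (xmul par k f) m = pder_sign par j m * of_nat (m j + 1) *
      (if 0 < m k then msgn par (unitm k) (?n(j := ?v)) * f (?n(j := ?v)) else 0)"
    unfolding pder_eq_sign xmul_def using kj by (simp add: mon_dec_upd_other)
  have R: "xmul par k (pder par j f) m = (if 0 < m k then msgn par (unitm k) ?n *
      (pder_sign par j ?n * of_nat (m j + 1) * f (?n(j := ?v))) else 0)"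
    unfolding xmul_def pder_eq_sign using kj by (simp add: mon_dec_other)
  show ?thesis
  proof (cases "0 < m k \<and> f (?n(j := ?v)) \<noteq> 0")
    case False
    then show ?thesis using L R kj by auto
  next
    case True
    then have mk: "0 < m k" and fnz: "f (?n(j := ?v)) \<noteq> 0" by auto
    have vv: "valid_mon N par (?n(j := ?v))" using fnz g by (simp add: supported_def)
    have nj: "par j \<longrightarrow> ?n j = 0" using vv kj by (auto simp: valid_mon_def mon_dec_other dest: spec[of _ j])
    have "pder par j (xmul par k f) m = (pder_sign par j m * msgn par (unitm k) (?n(j := ?v))) * of_nat (m j + 1) * f (?n(j := ?v))"
      using L mk by (simp add: algebra_simps)
    also have "\<dots> = (if par k \<and> par j then -1 else 1) * xmul par k (pder par j f) m"
      unfolding pder_sign_mul_msgn_upd[where par = par, OF kj mk nj] R using mk by (simp add: algebra_simps)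
    finally show ?thesis .
  qed
qed

lemma pder_xmul:
  fixes f :: "'k::comm_ring_1 spoly"
  assumes g: "supported N par f"
  shows "pder par j (xmul par k f) m =
    (if k = j then f m else 0) + (if par k \<and> par j then -1 else 1) * xmul par k (pder par j f) m"
  using pder_xmul_same[OF g, of j m] pder_xmul_other[OF g, of k j m] by (cases "k = j") simp_all

lemma sum_nonzero_ex: "sum f A \<noteq> 0 \<Longrightarrow> \<exists>a\<in>A. f a \<noteq> 0"
  by (meson sum.neutral)

lemma finite_divisors:
  fixes m :: mon and N :: nat
  assumes "\<forall>l\<ge>N. m l = 0"
  shows "finite {m1. \<forall>i. m1 i \<le> (m i :: nat)}"
proof -
  let ?M = "\<Sum>l<N. m l"
  have "{m1. \<forall>i. m1 i \<le> m i} \<subseteq> {f. \<forall>x. (x \<in> {..<N} \<longrightarrow> f x \<in> {0..?M}) \<and> (x \<notin> {..<N} \<longrightarrow> f x = 0)}"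
  proof (clarsimp)
    fix m1 x assume h: "\<forall>i. m1 i \<le> m i"
    show "(x < N \<longrightarrow> m1 x \<le> ?M) \<and> (\<not> x < N \<longrightarrow> m1 x = 0)"
    proof (intro conjI impI)
      assume "x < N"
      then have "m x \<le> ?M" by (intro member_le_sum) (auto simp: finite_lessThan)
      then show "m1 x \<le> ?M" using h le_trans by blast
    next
      assume "\<not> x < N" then show "m1 x = 0" using h assms by (metis le_zero_eq not_less)
    qed
  qed
  moreover have "finite {f. \<forall>x. (x \<in> {..<N} \<longrightarrow> f x \<in> {0..?M}) \<and> (x \<notin> {..<N} \<longrightarrow> f x = (0::nat))}"
    by (rule finite_set_of_finite_funs) auto
  ultimately show ?thesis by (rule finite_subset)
qed

lemma xmul_eq_zero_if_infinite_divisors: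
  assumes g: "supported N par f" and i: "i < N" and inf: "infinite {m1. \<forall>i. m1 i \<le> m i}"
  shows "xmul par i f m = 0"
proof (rule ccontr)
  assume "xmul par i f m \<noteq> 0"
  then have "f (mon_dec m i) \<noteq> 0" by (auto simp: xmul_def split: if_splits)
  then have "valid_mon N par (mon_dec m i)" using g by (simp add: supported_def)
  then have "\<forall>l\<ge>N. m l = 0" using i by (auto simp: valid_mon_def mon_dec_def unitm_def)
  then show False using inf finite_divisors by blast
qed

lemma pmul_emb_eq_xmul:
  fixes f :: "'k::comm_ring_1 spoly"
  assumes g: "supported N par f"
  shows "pmul par (emb N w) f = (\<lambda>m. \<Sum>i<N. w i * xmul par i f m)"
proof
  fix m :: mon
  let ?S = "{m1. \<forall>i. m1 i \<le> m i}"
  show "pmul par (emb N w) f m = (\<Sum>i<N. w i * xmul par i f m)"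
  proof (cases "finite ?S")
    case True
    have "pmul par (emb N w) f m = (\<Sum>m1\<in>?S. \<Sum>i<N. if m1 = unitm i then
        msgn par (unitm i) (mon_dec m i) * w i * f (mon_dec m i) else 0)"
      unfolding pmul_def emb_def
    proof (rule sum.cong[OF refl])
      fix m1
      show "msgn par m1 (\<lambda>i. m i - m1 i) * (\<Sum>i<N. if m1 = unitm i then w i else 0) * f (\<lambda>i. m i - m1 i) =
        (\<Sum>i<N. if m1 = unitm i then msgn par (unitm i) (mon_dec m i) * w i * f (mon_dec m i) else 0)"
        unfolding sum_distrib_left sum_distrib_right
        by (rule sum.cong[OF refl]) (auto simp: mon_dec_def)
    qed
    also have "\<dots> = (\<Sum>i<N. \<Sum>m1\<in>?S. if m1 = unitm i then
        msgn par (unitm i) (mon_dec m i) * w i * f (mon_dec m i) else 0)"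
      by (rule sum.swap)
    also have "\<dots> = (\<Sum>i<N. if unitm i \<in> ?S then msgn par (unitm i) (mon_dec m i) * w i * f (mon_dec m i) else 0)"
      using True by (simp add: sum.delta')
    also have "\<dots> = (\<Sum>i<N. w i * xmul par i f m)"
    proof (rule sum.cong[OF refl])
      fix i
      have "(unitm i \<in> ?S) = (0 < m i)"
        by (auto simp: unitm_def)
      then show "(if unitm i \<in> ?S then msgn par (unitm i) (mon_dec m i) * w i * f (mon_dec m i) else 0) = w i * xmul par i f m"
        by (simp add: xmul_def algebra_simps)
    qed
    finally show ?thesis .
  next
    case False
    then show ?thesis using xmul_eq_zero_if_infinite_divisors[OF g] by (simp add: pmul_def)
  qed
qed

lemma supported_xmul:
  assumes g: "supported N par f" and k: "k < N"
  shows "supported N par (xmul par k f)"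
  unfolding supported_def
proof (intro allI impI)
  fix m assume nz: "xmul par k f m \<noteq> 0"
  then have mk: "0 < m k" and ms: "msgn par (unitm k) (mon_dec m k) \<noteq> (0::'a)" and fz: "f (mon_dec m k) \<noteq> 0"
    by (auto simp: xmul_def split: if_splits)
  have v: "valid_mon N par (mon_dec m k)" using g fz by (simp add: supported_def)
  show "valid_mon N par m" unfolding valid_mon_def
  proof (intro conjI allI impI)
    fix i assume "N \<le> i"
    then show "m i = 0" using v k by (auto simp: valid_mon_def mon_dec_def unitm_def dest: spec[of _ i])
  next
    fix i assume pi: "par i"
    show "m i \<le> 1"
    proof (cases "i = k")
      case True
      then have "\<not> 0 < mon_dec m k k" using ms pi by (auto simp: msgn_unit split: if_splits)
      then show ?thesis using True by (simp add: mon_dec_def unitm_def)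
    next
      case False then show ?thesis using v pi by (auto simp: valid_mon_def mon_dec_def unitm_def dest: spec[of _ i])
    qed
  qed
qed

lemma supported_lincomb:
  fixes F :: "'a \<Rightarrow> 'k::comm_ring_1 spoly"
  assumes "\<forall>a\<in>A. supported N par (F a)"
  shows "supported N par (\<lambda>m. \<Sum>a\<in>A. c a * F a m)"
  unfolding supported_def
proof (intro allI impI)
  fix m assume "(\<Sum>a\<in>A. c a * F a m) \<noteq> 0"
  then obtain a where a: "a \<in> A" "c a * F a m \<noteq> 0" using sum_nonzero_ex by blast
  then have "F a m \<noteq> 0" by (metis mult_zero_right)
  then show "valid_mon N par m" using assms a by (auto simp: supported_def)
qed

lemma supported_pder: "supported N par f \<Longrightarrow> supported N par (pder par j f)"
  unfolding supported_def
proof (intro allI impI)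
  fix m assume g: "\<forall>m. f m \<noteq> 0 \<longrightarrow> valid_mon N par m" and nz: "pder par j f m \<noteq> 0"
  then have "f (m(j := m j + 1)) \<noteq> 0" unfolding pder_def by (metis mult_zero_right)
  then have "valid_mon N par (m(j := m j + 1))" using g by blast
  then show "valid_mon N par m" by (rule valid_mon_upd) simp
qed

lemma supported_pbr: "supported N par f \<Longrightarrow> supported N par (pbr N par B g f)"
  unfolding supported_def pbr_def
proof (intro allI impI)
  fix m assume g: "\<forall>m. f m \<noteq> 0 \<longrightarrow> valid_mon N par m"
    and nz: "(\<Sum>i<N. \<Sum>j<N. g i * B i j * pder par j f m) \<noteq> 0"
  then obtain i where "(\<Sum>j<N. g i * B i j * pder par j f m) \<noteq> 0" using sum_nonzero_ex by blast
  then obtain j where "g i * B i j * pder par j f m \<noteq> 0" using sum_nonzero_ex by blast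
  then have "pder par j f m \<noteq> 0" by auto
  then show "valid_mon N par m" using supported_pder[of N par f j] g by (auto simp: supported_def)
qed

lemma supported_pmul_emb: "supported N par f \<Longrightarrow> supported N par (pmul par (emb N w) f)"
  unfolding pmul_emb_eq_xmul by (rule supported_lincomb) (auto intro: supported_xmul)

lemma supported_pone: "supported N par (pone :: 'k::comm_ring_1 spoly)"
  by (auto simp: supported_def pone_def valid_mon_def)

lemma supported_vprod: "supported N par (vprod N par vs :: 'k::comm_ring_1 spoly)"
  by (induct vs) (auto simp: vprod_def supported_pone intro: supported_pmul_emb)

definition bcoef :: "nat \<Rightarrow> (nat \<Rightarrow> nat \<Rightarrow> 'k::comm_ring_1) \<Rightarrow> 'k vec \<Rightarrow> nat \<Rightarrow> 'k" where
  "bcoef N B g j = (\<Sum>i<N. g i * B i j)"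

lemma pbr_eq_bcoef: "pbr N par B g h = (\<lambda>m. \<Sum>j<N. bcoef N B g j * pder par j h m)"
  unfolding pbr_def bcoef_def
  by (rule ext, subst sum.swap) (simp add: sum_distrib_right)

lemma bform_eq_bcoef: "bform N B g w = (\<Sum>j<N. bcoef N B g j * w j)"
  unfolding bform_def bcoef_def
  by (subst sum.swap) (simp add: sum_distrib_right)

lemma pder_lin: "pder par j (\<lambda>m. \<Sum>a\<in>A. c a * F a m) m = (\<Sum>a\<in>A. c a * pder par j (F a) m)"
  unfolding pder_def sum_distrib_left by (rule sum.cong) (simp_all add: mult_ac)

lemma xmul_lin: "xmul par k (\<lambda>m. \<Sum>a\<in>A. c a * F a m) m = (\<Sum>a\<in>A. c a * xmul par k (F a) m)"
  unfolding xmul_def sum_distrib_left by (simp add: mult_ac)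


text \<open>Negating the odd part of \<open>g\<close> realises the sign \<open>(-1)^(|g| |w|)\<close> of the Leibniz rule
  for odd \<open>w\<close>.\<close>
definition twist :: "(nat \<Rightarrow> bool) \<Rightarrow> 'k::comm_ring_1 vec \<Rightarrow> 'k vec" where
  "twist par g = (\<lambda>i. if par i then - g i else g i)"

lemma bcoef_twist:
  assumes Bev: "\<forall>i<N. \<forall>j<N. par i \<noteq> par j \<longrightarrow> B i j = 0" and j: "j < N"
  shows "bcoef N B (twist par g) j = (if par j then - bcoef N B g j else bcoef N B g j)"
proof -
  have "bcoef N B (twist par g) j = (\<Sum>i<N. if par j then - (g i * B i j) else g i * B i j)"
    unfolding bcoef_def twist_def by (rule sum.cong) (use Bev j in auto)
  then show ?thesis by (simp add: bcoef_def sum_negf)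
qed

lemma pbr_pmul_emb_expand:
  fixes f :: "'k::comm_ring_1 spoly"
  assumes g: "supported N par f"
  shows "pbr N par B g (pmul par (emb N w) f) m = (\<Sum>j<N. bcoef N B g j * w j) * f m +
    (\<Sum>k<N. \<Sum>j<N. bcoef N B g j * w k * (if par k \<and> par j then -1 else 1) * xmul par k (pder par j f) m)"
proof -
  let ?c = "bcoef N B g"
  let ?P = "\<lambda>k j. xmul par k (pder par j f) m"
  let ?s = "\<lambda>k j. if par k \<and> par j then -1 else (1::'k)"
  have "pbr N par B g (pmul par (emb N w) f) m = (\<Sum>j<N. ?c j * (\<Sum>k<N. w k * pder par j (xmul par k f) m))"
    unfolding pbr_eq_bcoef pmul_emb_eq_xmul[OF g] pder_lin ..
  also have "\<dots> = (\<Sum>j<N. ?c j * (\<Sum>k<N. w k * ((if k = j then f m else 0) + ?s k j * ?P k j)))"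
    unfolding pder_xmul[OF g] ..
  also have "\<dots> = (\<Sum>j<N. ?c j * w j * f m + (\<Sum>k<N. ?c j * w k * ?s k j * ?P k j))"
  proof (rule sum.cong[OF refl])
    fix j assume j: "j \<in> {..<N}"
    have "(\<Sum>k<N. w k * ((if k = j then f m else 0) + ?s k j * ?P k j)) =
        (\<Sum>k<N. (if k = j then w k * f m else 0)) + (\<Sum>k<N. w k * ?s k j * ?P k j)"
      unfolding sum.distrib[symmetric] by (rule sum.cong) (auto simp: distrib_left mult.assoc)
    also have "(\<Sum>k<N. (if k = j then w k * f m else 0)) = w j * f m" using j by (simp add: sum.delta')
    finally show "?c j * (\<Sum>k<N. w k * ((if k = j then f m else 0) + ?s k j * ?P k j)) =
        ?c j * w j * f m + (\<Sum>k<N. ?c j * w k * ?s k j * ?P k j)"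
      by (simp add: algebra_simps sum_distrib_left)
  qed
  also have "\<dots> = (\<Sum>j<N. ?c j * w j * f m) + (\<Sum>j<N. \<Sum>k<N. ?c j * w k * ?s k j * ?P k j)"
    by (rule sum.distrib)
  also have "(\<Sum>j<N. ?c j * w j * f m) = (\<Sum>j<N. ?c j * w j) * f m"
    by (rule sum_distrib_right[symmetric])
  also have "(\<Sum>j<N. \<Sum>k<N. ?c j * w k * ?s k j * ?P k j) = (\<Sum>k<N. \<Sum>j<N. ?c j * w k * ?s k j * ?P k j)"
    by (rule sum.swap)
  finally show ?thesis .
qed

lemma pbr_pmul_emb:
  fixes f :: "'k::comm_ring_1 spoly"
  assumes g: "supported N par f" and Bev: "\<forall>i<N. \<forall>j<N. par i \<noteq> par j \<longrightarrow> B i j = 0"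
  shows "pbr N par B g (pmul par (emb N w) f) = (\<lambda>m. bform N B g w * f m
     + pmul par (emb N (evpart par w)) (pbr N par B g f) m
     + pmul par (emb N (odpart par w)) (pbr N par B (twist par g) f) m)"
proof
  fix m
  let ?c = "bcoef N B g"
  let ?P = "\<lambda>k j. xmul par k (pder par j f) m"
  let ?s = "\<lambda>k j. if par k \<and> par j then -1 else (1::'k)"
  note L = pbr_pmul_emb_expand[OF g, of B g w m]
  have T2: "pmul par (emb N (evpart par w)) (pbr N par B g f) m =
      (\<Sum>k<N. \<Sum>j<N. evpart par w k * ?c j * ?P k j)"
    by (subst pmul_emb_eq_xmul[OF supported_pbr[OF g]]) (simp only: pbr_eq_bcoef xmul_lin sum_distrib_left mult.assoc)
  have T3: "pmul par (emb N (odpart par w)) (pbr N par B (twist par g) f) m =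
      (\<Sum>k<N. \<Sum>j<N. odpart par w k * bcoef N B (twist par g) j * ?P k j)"
    by (subst pmul_emb_eq_xmul[OF supported_pbr[OF g]]) (simp only: pbr_eq_bcoef xmul_lin sum_distrib_left mult.assoc)
  have E: "(\<Sum>k<N. \<Sum>j<N. evpart par w k * ?c j * ?P k j) + (\<Sum>k<N. \<Sum>j<N. odpart par w k * bcoef N B (twist par g) j * ?P k j)
      = (\<Sum>k<N. \<Sum>j<N. ?c j * w k * ?s k j * ?P k j)"
    unfolding sum.distrib[symmetric]
  proof (intro sum.cong[OF refl])
    fix k j assume j: "j \<in> {..<N}"
    show "evpart par w k * ?c j * ?P k j + odpart par w k * bcoef N B (twist par g) j * ?P k j = ?c j * w k * ?s k j * ?P k j"
      using bcoef_twist[OF Bev, of j g] j by (auto simp: evpart_def odpart_def algebra_simps)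
  qed
  show "pbr N par B g (pmul par (emb N w) f) m = bform N B g w * f m
     + pmul par (emb N (evpart par w)) (pbr N par B g f) m
     + pmul par (emb N (odpart par w)) (pbr N par B (twist par g) f) m"
    unfolding L T2 T3 bform_eq_bcoef E[symmetric] by (simp only: add.assoc)
qed

lemma kspan_zero: "(\<lambda>m. 0) \<in> kspan S"
  unfolding kspan_def by (rule CollectI, rule exI[of _ "{}"]) auto

lemma kspan_base: "x \<in> S \<Longrightarrow> x \<in> kspan S"
  unfolding kspan_def by (rule CollectI, rule exI[of _ "{x}"], rule exI[of _ "\<lambda>_. 1"]) auto

lemma kspan_add:
  assumes "f \<in> kspan S" "g \<in> kspan S"
  shows "(\<lambda>m. f m + g m) \<in> kspan S"
proof -
  obtain F1 c1 where 1: "finite F1" "F1 \<subseteq> S" "f = (\<lambda>m. \<Sum>x\<in>F1. c1 x * x m)"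
    using assms(1) unfolding kspan_def by blast
  obtain F2 c2 where 2: "finite F2" "F2 \<subseteq> S" "g = (\<lambda>m. \<Sum>x\<in>F2. c2 x * x m)"
    using assms(2) unfolding kspan_def by blast
  let ?c = "\<lambda>x. (if x \<in> F1 then c1 x else 0) + (if x \<in> F2 then c2 x else 0)"
  have "(\<lambda>m. f m + g m) = (\<lambda>m. \<Sum>x\<in>F1 \<union> F2. ?c x * x m)"
  proof
    fix m
    have "(\<Sum>x\<in>F1 \<union> F2. ?c x * x m) = (\<Sum>x\<in>F1 \<union> F2. (if x \<in> F1 then c1 x * x m else 0))
        + (\<Sum>x\<in>F1 \<union> F2. (if x \<in> F2 then c2 x * x m else 0))"
      unfolding sum.distrib[symmetric] by (rule sum.cong) (auto simp: distrib_right)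
    also have "(\<Sum>x\<in>F1 \<union> F2. (if x \<in> F1 then c1 x * x m else 0)) = (\<Sum>x\<in>F1. c1 x * x m)"
      using 1 2 by (simp add: sum.inter_restrict[symmetric] Int_absorb1)
    also have "(\<Sum>x\<in>F1 \<union> F2. (if x \<in> F2 then c2 x * x m else 0)) = (\<Sum>x\<in>F2. c2 x * x m)"
      using 1 2 by (simp add: sum.inter_restrict[symmetric] Int_absorb1)
    finally show "f m + g m = (\<Sum>x\<in>F1 \<union> F2. ?c x * x m)" using 1 2 by simp
  qed
  note eq = this
  show ?thesis unfolding kspan_def mem_Collect_eq
    by (intro exI[of _ "F1 \<union> F2"] exI[of _ ?c] conjI) (use 1 2 eq in simp_all)
qed

lemma kspan_smul:
  assumes "f \<in> kspan S"
  shows "(\<lambda>m. a * f m) \<in> kspan S"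
proof -
  obtain F1 c1 where 1: "finite F1" "F1 \<subseteq> S" "f = (\<lambda>m. \<Sum>x\<in>F1. c1 x * x m)"
    using assms(1) unfolding kspan_def by blast
  have "(\<lambda>m. a * f m) = (\<lambda>m. \<Sum>x\<in>F1. (a * c1 x) * x m)"
    using 1 by (simp add: sum_distrib_left mult.assoc)
  note eq = this
  show ?thesis unfolding kspan_def mem_Collect_eq
    by (intro exI[of _ "F1"] exI[of _ "\<lambda>x. a * c1 x"] conjI) (use 1 eq in simp_all)
qed

lemma kspan_lin:
  assumes "finite A" "\<forall>a\<in>A. F a \<in> kspan S"
  shows "(\<lambda>m. \<Sum>a\<in>A. c a * F a m) \<in> kspan S"
  using assms
proof (induct A rule: finite_induct)
  case empty then show ?case using kspan_zero by simp
next
  case (insert a A)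
  have Fa: "F a \<in> kspan S" using insert.prems by simp
  have IH: "(\<lambda>m. \<Sum>a\<in>A. c a * F a m) \<in> kspan S" using insert.hyps(3) insert.prems by simp
  have "(\<lambda>m. c a * F a m + (\<Sum>a\<in>A. c a * F a m)) \<in> kspan S"
    using kspan_add[OF kspan_smul[OF Fa, of "c a"] IH] by simp
  moreover have "(\<lambda>m. \<Sum>a\<in>insert a A. c a * F a m) = (\<lambda>m. c a * F a m + (\<Sum>a\<in>A. c a * F a m))"
    using insert.hyps(1,2) by simp
  ultimately show ?case by simp
qed

lemma kspan_mono: "S \<subseteq> T \<Longrightarrow> kspan S \<subseteq> kspan T"
  unfolding kspan_def by blast

lemma kspan_map:
  assumes lin: "\<And>F c. finite F \<Longrightarrow> \<phi> (\<lambda>m. \<Sum>x\<in>F. c x * x m) = (\<lambda>m. \<Sum>x\<in>F. c x * \<phi> x m)"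
    and base: "\<And>x. x \<in> S \<Longrightarrow> \<phi> x \<in> kspan T"
    and f: "f \<in> kspan S"
  shows "\<phi> f \<in> kspan T"
proof -
  obtain F c where 1: "finite F" "F \<subseteq> S" "f = (\<lambda>m. \<Sum>x\<in>F. c x * x m)"
    using f unfolding kspan_def by blast
  show ?thesis unfolding 1(3) lin[OF 1(1)] by (rule kspan_lin) (use 1 base in auto)
qed

lemma sum_mult_lincomb_swap: fixes a :: "'j \<Rightarrow> 'k::comm_ring_1" shows "(\<Sum>j\<in>J. a j * (\<Sum>x\<in>F. c x * P x j)) = (\<Sum>x\<in>F. c x * (\<Sum>j\<in>J. a j * P x j))"
proof -
  have "(\<Sum>j\<in>J. a j * (\<Sum>x\<in>F. c x * P x j)) = (\<Sum>j\<in>J. \<Sum>x\<in>F. c x * (a j * P x j))"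
    by (rule sum.cong[OF refl]) (simp add: sum_distrib_left mult.left_commute)
  also have "\<dots> = (\<Sum>x\<in>F. \<Sum>j\<in>J. c x * (a j * P x j))" by (rule sum.swap)
  also have "\<dots> = (\<Sum>x\<in>F. c x * (\<Sum>j\<in>J. a j * P x j))" by (simp only: sum_distrib_left)
  finally show ?thesis .
qed

lemma pbr_lin: "pbr N par B g (\<lambda>m. \<Sum>x\<in>F. c x * x m) = (\<lambda>m. \<Sum>x\<in>F. c x * pbr N par B g x m)"
  unfolding pbr_eq_bcoef pder_lin by (rule ext) (rule sum_mult_lincomb_swap)

lemma pmul_lin: "pmul par h (\<lambda>m. \<Sum>x\<in>F. c x * x m) = (\<lambda>m. \<Sum>x\<in>F. c x * pmul par h x m)"
proof
  fix m
  show "pmul par h (\<lambda>m. \<Sum>x\<in>F. c x * x m) m = (\<Sum>x\<in>F. c x * pmul par h x m)"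
    unfolding pmul_def using sum_mult_lincomb_swap[where a="\<lambda>m1. msgn par m1 (\<lambda>i. m i - m1 i) * h m1" and J="{m1. \<forall>i. m1 i \<le> m i}" and c=c and F=F
      and P="\<lambda>x m1. x (\<lambda>i. m i - m1 i)"] by (simp add: mult.assoc)
qed

lemma pbr_add: "pbr N par B g (\<lambda>m. f1 m + f2 m) = (\<lambda>m. pbr N par B g f1 m + pbr N par B g f2 m)"
  unfolding pbr_def pder_def by (rule ext) (simp add: algebra_simps sum.distrib)

lemma brk_add: "brk N par B as (\<lambda>m. f1 m + f2 m) = (\<lambda>m. brk N par B as f1 m + brk N par B as f2 m)"
  by (induct as) (simp_all add: brk_def pbr_add)

lemma deg1_add: "deg1 N (\<lambda>m. f1 m + f2 m) = deg1 N f1 + deg1 N f2"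
  by (simp add: deg1_def fun_eq_iff)

lemma deg1_lin: "deg1 N (\<lambda>m. \<Sum>x\<in>F. c x * x m) = (\<lambda>i. \<Sum>x\<in>F. c x * deg1 N x i)"
  by (simp add: deg1_def fun_eq_iff)

lemma pone_upd: "pone (m(j := m j + 1)) = 0"
proof -
  have "m(j := m j + 1) \<noteq> (\<lambda>_. 0)" by (metis add_is_0 fun_upd_same one_neq_zero)
  then show ?thesis by (simp add: pone_def)
qed

lemma pbr_pone: "pbr N par B g pone = (\<lambda>m. 0)"
  unfolding pbr_def pder_def pone_upd by simp

lemma pmul_zero: "pmul par h (\<lambda>m. 0) = (\<lambda>m. 0)"
  by (simp add: pmul_def fun_eq_iff)

lemma vprod_cons: "vprod N par (w # ws) = pmul par (emb N w) (vprod N par ws)"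
  by (simp add: vprod_def)

lemma pmul_emb_Ssub:
  assumes u: "u \<in> A" and f: "f \<in> Ssub N par d A"
  shows "pmul par (emb N u) f \<in> Ssub N par (Suc d) A"
  using f unfolding Ssub_def
proof (rule kspan_map[of "pmul par (emb N u)", rotated 2])
  fix x assume "x \<in> {vprod N par vs |vs. length vs = d \<and> set vs \<subseteq> A}"
  then obtain vs where "x = vprod N par vs" "length vs = d" "set vs \<subseteq> A" by blast
  then have "pmul par (emb N u) x = vprod N par (u # vs)" "length (u # vs) = Suc d" "set (u # vs) \<subseteq> A"
    using u by (auto simp: vprod_cons)
  then show "pmul par (emb N u) x \<in> kspan {vprod N par vs |vs. length vs = Suc d \<and> set vs \<subseteq> A}"
    by (intro kspan_base) blast
qed (rule pmul_lin)

definition Smeet :: "nat \<Rightarrow> (nat \<Rightarrow> bool) \<Rightarrow> nat \<Rightarrow> ('k::comm_ring_1) vec set \<Rightarrow> 'k vec set \<Rightarrow> 'k spoly set" where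
  "Smeet N par d A Z = kspan {vprod N par vs | vs. length vs = d \<and> set vs \<subseteq> A \<and> (\<exists>z\<in>Z. z \<in> set vs)}"

lemma kspan_add3: "a \<in> kspan S \<Longrightarrow> b \<in> kspan S \<Longrightarrow> c \<in> kspan S \<Longrightarrow> (\<lambda>m. a m + b m + c m) \<in> kspan S"
  using kspan_add[of a S b] kspan_add[of "\<lambda>m. a m + b m" S c] by simp

lemma pbr_vprod_cons:
  fixes B :: "nat \<Rightarrow> nat \<Rightarrow> 'k::comm_ring_1"
  assumes Bev: "\<forall>i<N. \<forall>j<N. par i \<noteq> par j \<longrightarrow> B i j = 0"
  shows "pbr N par B g (vprod N par (w # ws)) = (\<lambda>m. bform N B g w * vprod N par ws m
     + pmul par (emb N (evpart par w)) (pbr N par B g (vprod N par ws)) m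
     + pmul par (emb N (odpart par w)) (pbr N par B (twist par g) (vprod N par ws)) m)"
  unfolding vprod_cons by (rule pbr_pmul_emb[OF supported_vprod Bev])

lemma pmul_emb_Ssub_Smeet:
  assumes u: "u \<in> A" "u \<in> Z" and f: "f \<in> Ssub N par d A"
  shows "pmul par (emb N u) f \<in> Smeet N par (Suc d) A Z"
  using f unfolding Ssub_def Smeet_def
proof (rule kspan_map[of "pmul par (emb N u)", rotated 2])
  fix x assume "x \<in> {vprod N par vs |vs. length vs = d \<and> set vs \<subseteq> A}"
  then obtain vs where "x = vprod N par vs" "length vs = d" "set vs \<subseteq> A" by blast
  then have "pmul par (emb N u) x = vprod N par (u # vs)" "length (u # vs) = Suc d" "set (u # vs) \<subseteq> A"
    "\<exists>z\<in>Z. z \<in> set (u # vs)"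
    using u by (auto simp: vprod_cons)
  then show "pmul par (emb N u) x \<in> kspan {vprod N par vs |vs. length vs = Suc d \<and> set vs \<subseteq> A \<and> (\<exists>z\<in>Z. z \<in> set vs)}"
    by (intro kspan_base) blast
qed (rule pmul_lin)

lemma pmul_emb_Smeet:
  assumes u: "u \<in> A" and f: "f \<in> Smeet N par d A Z"
  shows "pmul par (emb N u) f \<in> Smeet N par (Suc d) A Z"
  using f unfolding Smeet_def
proof (rule kspan_map[of "pmul par (emb N u)", rotated 2])
  fix x assume "x \<in> {vprod N par vs |vs. length vs = d \<and> set vs \<subseteq> A \<and> (\<exists>z\<in>Z. z \<in> set vs)}"
  then obtain vs where "x = vprod N par vs" "length vs = d" "set vs \<subseteq> A" "\<exists>z\<in>Z. z \<in> set vs" by blast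
  then have "pmul par (emb N u) x = vprod N par (u # vs)" "length (u # vs) = Suc d" "set (u # vs) \<subseteq> A"
    "\<exists>z\<in>Z. z \<in> set (u # vs)"
    using u by (auto simp: vprod_cons)
  then show "pmul par (emb N u) x \<in> kspan {vprod N par vs |vs. length vs = Suc d \<and> set vs \<subseteq> A \<and> (\<exists>z\<in>Z. z \<in> set vs)}"
    by (intro kspan_base) blast
qed (rule pmul_lin)

lemma vprod_Ssub: "length vs = d \<Longrightarrow> set vs \<subseteq> A \<Longrightarrow> vprod N par vs \<in> Ssub N par d A"
  unfolding Ssub_def by (intro kspan_base) blast

lemma vprod_Smeet:
  "length vs = d \<Longrightarrow> set vs \<subseteq> A \<Longrightarrow> z \<in> Z \<Longrightarrow> z \<in> set vs \<Longrightarrow> vprod N par vs \<in> Smeet N par d A Z"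
  unfolding Smeet_def by (intro kspan_base) blast

lemma pbr_vprod_Ssub:
  fixes B :: "nat \<Rightarrow> nat \<Rightarrow> 'k::comm_ring_1"
  assumes Bev: "\<forall>i<N. \<forall>j<N. par i \<noteq> par j \<longrightarrow> B i j = 0"
    and cl: "\<forall>a\<in>A. evpart par a \<in> A \<and> odpart par a \<in> A"
  shows "set (w # ws) \<subseteq> A \<Longrightarrow> pbr N par B g (vprod N par (w # ws)) \<in> Ssub N par (length ws) A"
proof (induction ws arbitrary: w g)
  case Nil
  have "pbr N par B g (vprod N par [w]) = (\<lambda>m. bform N B g w * pone m)"
    unfolding pbr_vprod_cons[OF Bev] by (simp add: vprod_def pbr_pone pmul_zero)
  then show ?case
    using kspan_smul[OF vprod_Ssub[of "[]" 0 A N par, unfolded Ssub_def]]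
    by (simp add: Ssub_def vprod_def)
next
  case (Cons w' ws)
  let ?v = "vprod N par (w' # ws)"
  have w: "evpart par w \<in> A" "odpart par w \<in> A" and ws: "set (w' # ws) \<subseteq> A"
    using Cons.prems cl by auto
  have "(\<lambda>m. bform N B g w * ?v m) \<in> Ssub N par (length (w' # ws)) A"
    using kspan_smul vprod_Ssub[OF refl ws] unfolding Ssub_def by blast
  moreover have "pmul par (emb N (evpart par w)) (pbr N par B g ?v) \<in> Ssub N par (length (w' # ws)) A"
    "pmul par (emb N (odpart par w)) (pbr N par B (twist par g) ?v) \<in> Ssub N par (length (w' # ws)) A"
    using pmul_emb_Ssub[OF w(1)] pmul_emb_Ssub[OF w(2)] Cons.IH[OF ws] by simp_all
  ultimately show ?case
    unfolding pbr_vprod_cons[OF Bev] Ssub_def by (rule kspan_add3)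
qed

lemma pbr_Ssub:
  fixes B :: "nat \<Rightarrow> nat \<Rightarrow> 'k::comm_ring_1"
  assumes Bev: "\<forall>i<N. \<forall>j<N. par i \<noteq> par j \<longrightarrow> B i j = 0"
    and cl: "\<forall>a\<in>A. evpart par a \<in> A \<and> odpart par a \<in> A"
    and f: "f \<in> Ssub N par (Suc d) A"
  shows "pbr N par B g f \<in> Ssub N par d A"
  using f unfolding Ssub_def
proof (rule kspan_map[of "pbr N par B g", rotated 2])
  fix x assume "x \<in> {vprod N par vs |vs. length vs = Suc d \<and> set vs \<subseteq> A}"
  then obtain w ws where "x = vprod N par (w # ws)" "length ws = d" "set (w # ws) \<subseteq> A"
    by (auto simp: length_Suc_conv)
  then show "pbr N par B g x \<in> kspan {vprod N par vs |vs. length vs = d \<and> set vs \<subseteq> A}"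
    using pbr_vprod_Ssub[OF Bev cl] unfolding Ssub_def by blast
qed (rule pbr_lin)

text \<open>The Leibniz rule either keeps the factor from \<open>Z\<close> or replaces it by its pairing with
  \<open>g\<close>, which vanishes.\<close>
lemma pbr_vprod_Smeet:
  fixes B :: "nat \<Rightarrow> nat \<Rightarrow> 'k::comm_ring_1"
  assumes Bev: "\<forall>i<N. \<forall>j<N. par i \<noteq> par j \<longrightarrow> B i j = 0"
    and cl: "\<forall>a\<in>A. evpart par a \<in> A \<and> odpart par a \<in> A"
    and clZ: "\<forall>a\<in>Z. evpart par a \<in> Z \<and> odpart par a \<in> Z"
    and G0: "\<forall>g\<in>G0. twist par g \<in> G0"
    and orth: "\<forall>g\<in>G0. \<forall>z\<in>Z. bform N B g z = 0"
  shows "g \<in> G0 \<Longrightarrow> set (w # ws) \<subseteq> A \<Longrightarrow> z \<in> Z \<Longrightarrow> z \<in> set (w # ws) \<Longrightarrow>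
    pbr N par B g (vprod N par (w # ws)) \<in> Smeet N par (length ws) A Z"
proof (induction ws arbitrary: w g)
  case Nil
  then have "pbr N par B g (vprod N par [w]) = (\<lambda>m. 0)"
    unfolding pbr_vprod_cons[OF Bev] using orth by (simp add: vprod_def pbr_pone pmul_zero)
  then show ?case using kspan_zero by (simp add: Smeet_def)
next
  case (Cons w' ws)
  let ?v = "vprod N par (w' # ws)"
  have w: "evpart par w \<in> A" "odpart par w \<in> A" and ws: "set (w' # ws) \<subseteq> A"
    using Cons.prems cl by auto
  have tg: "twist par g \<in> G0" using G0 Cons.prems by blast
  have "(\<lambda>m. bform N B g w * ?v m) \<in> Smeet N par (length (w' # ws)) A Z
    \<and> pmul par (emb N (evpart par w)) (pbr N par B g ?v) \<in> Smeet N par (length (w' # ws)) A Z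
    \<and> pmul par (emb N (odpart par w)) (pbr N par B (twist par g) ?v) \<in> Smeet N par (length (w' # ws)) A Z"
  proof (cases "w \<in> Z")
    case True
    then show ?thesis
      using orth Cons.prems(1) kspan_zero clZ w pbr_vprod_Ssub[OF Bev cl ws]
        pmul_emb_Ssub_Smeet[of "evpart par w" A Z] pmul_emb_Ssub_Smeet[of "odpart par w" A Z]
      by (simp add: Smeet_def)
  next
    case False
    then have "z \<in> set (w' # ws)" using Cons.prems by auto
    then have v: "?v \<in> Smeet N par (length (w' # ws)) A Z"
      using vprod_Smeet[OF refl ws Cons.prems(3)] by blast
    have "pbr N par B g' ?v \<in> Smeet N par (length ws) A Z" if "g' \<in> G0" for g'
      using Cons.IH[OF that ws Cons.prems(3)] \<open>z \<in> set (w' # ws)\<close> by blast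
    then show ?thesis
      using kspan_smul[OF v[unfolded Smeet_def]] Cons.prems(1) tg
        pmul_emb_Smeet[OF w(1)] pmul_emb_Smeet[OF w(2)]
      unfolding Smeet_def by simp
  qed
  then show ?case
    unfolding pbr_vprod_cons[OF Bev] Smeet_def using kspan_add3 by blast
qed

lemma pbr_Smeet:
  fixes B :: "nat \<Rightarrow> nat \<Rightarrow> 'k::comm_ring_1"
  assumes Bev: "\<forall>i<N. \<forall>j<N. par i \<noteq> par j \<longrightarrow> B i j = 0"
    and cl: "\<forall>a\<in>A. evpart par a \<in> A \<and> odpart par a \<in> A"
    and clZ: "\<forall>a\<in>Z. evpart par a \<in> Z \<and> odpart par a \<in> Z"
    and G0: "\<forall>g\<in>G0. twist par g \<in> G0"
    and orth: "\<forall>g\<in>G0. \<forall>z\<in>Z. bform N B g z = 0"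
    and g: "g \<in> G0" and f: "f \<in> Smeet N par (Suc d) A Z"
  shows "pbr N par B g f \<in> Smeet N par d A Z"
  using f unfolding Smeet_def
proof (rule kspan_map[of "pbr N par B g", rotated 2])
  fix x assume "x \<in> {vprod N par vs |vs. length vs = Suc d \<and> set vs \<subseteq> A \<and> (\<exists>z\<in>Z. z \<in> set vs)}"
  then obtain w ws z where "x = vprod N par (w # ws)" "length ws = d" "set (w # ws) \<subseteq> A"
      "z \<in> Z" "z \<in> set (w # ws)"
    by (auto simp: length_Suc_conv)
  then show "pbr N par B g x \<in> kspan {vprod N par vs |vs. length vs = d \<and> set vs \<subseteq> A \<and> (\<exists>z\<in>Z. z \<in> set vs)}"
    using pbr_vprod_Smeet[OF Bev cl clZ G0 orth g] unfolding Smeet_def by blast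
qed (rule pbr_lin)

lemma brk_cons: "brk N par B (a # as) f = pbr N par B a (brk N par B as f)"
  by (simp add: brk_def)

lemma brk_Ssub:
  fixes B :: "nat \<Rightarrow> nat \<Rightarrow> 'k::comm_ring_1"
  assumes Bev: "\<forall>i<N. \<forall>j<N. par i \<noteq> par j \<longrightarrow> B i j = 0"
    and cl: "\<forall>a\<in>A. evpart par a \<in> A \<and> odpart par a \<in> A"
  shows "f \<in> Ssub N par (d + length as) A \<Longrightarrow> brk N par B as f \<in> Ssub N par d A"
proof (induct as arbitrary: d)
  case Nil then show ?case by (simp add: brk_def)
next
  case (Cons a as)
  have "brk N par B as f \<in> Ssub N par (Suc d) A" using Cons by simp
  then show ?case unfolding brk_cons by (rule pbr_Ssub[OF Bev cl])
qed

lemma brk_Smeet: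
  fixes B :: "nat \<Rightarrow> nat \<Rightarrow> 'k::comm_ring_1"
  assumes Bev: "\<forall>i<N. \<forall>j<N. par i \<noteq> par j \<longrightarrow> B i j = 0"
    and cl: "\<forall>a\<in>A. evpart par a \<in> A \<and> odpart par a \<in> A"
    and clZ: "\<forall>a\<in>Z. evpart par a \<in> Z \<and> odpart par a \<in> Z"
    and G0: "\<forall>g\<in>G0. twist par g \<in> G0"
    and orth: "\<forall>g\<in>G0. \<forall>z\<in>Z. bform N B g z = 0"
  shows "set as \<subseteq> G0 \<Longrightarrow> f \<in> Smeet N par (d + length as) A Z \<Longrightarrow> brk N par B as f \<in> Smeet N par d A Z"
proof (induct as arbitrary: d)
  case Nil then show ?case by (simp add: brk_def)
next
  case (Cons a as)
  have "brk N par B as f \<in> Smeet N par (Suc d) A Z" using Cons by simp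
  then show ?case unfolding brk_cons using pbr_Smeet[OF Bev cl clZ G0 orth] Cons.prems by simp
qed

lemma deg1_vprod_single:
  assumes w: "(w :: 'k::comm_ring_1 vec) \<in> V N"
  shows "deg1 N (vprod N par [w]) = w"
proof
  fix j
  have X: "xmul par i pone (unitm j) = (if i = j then 1 else (0::'k))" for i
  proof (cases "i = j")
    case True
    have "mon_dec (unitm j) j = (\<lambda>_. 0)" by (simp add: mon_dec_def unitm_def fun_eq_iff)
    moreover have "msgn par (unitm j) (\<lambda>_. 0) = (1::'k)" by (simp add: msgn_def)
    moreover have "unitm j j = 1" by (simp add: unitm_def)
    ultimately show ?thesis using True by (simp add: xmul_def pone_def)
  next
    case False then show ?thesis by (simp add: xmul_def unitm_def)
  qed
  have "vprod N par [w] = (\<lambda>m. \<Sum>i<N. w i * xmul par i pone m)"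
    by (simp add: vprod_def pmul_emb_eq_xmul[OF supported_pone])
  then show "deg1 N (vprod N par [w]) j = w j"
    using w by (simp add: deg1_def X V_def sum.delta' if_distrib cong: if_cong)
qed

lemma deg1_Ssub_one:
  assumes X: "subsp N X" and AX: "A \<subseteq> X" and f: "f \<in> Ssub N par (Suc 0) A"
  shows "deg1 N f \<in> X"
proof -
  obtain F c where 1: "finite F" "F \<subseteq> {vprod N par vs |vs. length vs = Suc 0 \<and> set vs \<subseteq> A}" "f = (\<lambda>m. \<Sum>x\<in>F. c x * x m)"
    using f unfolding Ssub_def kspan_def by blast
  have "\<forall>x\<in>F. deg1 N x \<in> X"
  proof
    fix x assume "x \<in> F"
    then obtain w where "x = vprod N par [w]" "w \<in> A" using 1(2) by (auto simp: length_Suc_conv)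
    moreover have "w \<in> V N" using X AX \<open>w \<in> A\<close> by (auto simp: subsp_def)
    ultimately show "deg1 N x \<in> X" using deg1_vprod_single[of w N par] AX by auto
  qed
  then show ?thesis unfolding 1(3) deg1_lin by (rule subsp_lincomb[OF X 1(1)])
qed

lemma deg1_Smeet_one:
  assumes X: "subsp N X" and ZX: "Z \<subseteq> X" and f: "f \<in> Smeet N par (Suc 0) A Z"
  shows "deg1 N f \<in> X"
proof -
  obtain F c where 1: "finite F" "F \<subseteq> {vprod N par vs |vs. length vs = Suc 0 \<and> set vs \<subseteq> A \<and> (\<exists>z\<in>Z. z \<in> set vs)}"
     "f = (\<lambda>m. \<Sum>x\<in>F. c x * x m)"
    using f unfolding Smeet_def kspan_def by blast
  have "\<forall>x\<in>F. deg1 N x \<in> X"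
  proof
    fix x assume "x \<in> F"
    then obtain w where "x = vprod N par [w]" "w \<in> Z" using 1(2) by (auto simp: length_Suc_conv)
    moreover have "w \<in> V N" using X ZX \<open>w \<in> Z\<close> by (auto simp: subsp_def)
    ultimately show "deg1 N x \<in> X" using deg1_vprod_single[of w N par] ZX by auto
  qed
  then show ?thesis unfolding 1(3) deg1_lin by (rule subsp_lincomb[OF X 1(1)])
qed


lemma potop_add: "potop N par B (\<lambda>m. f m + g m) as = potop N par B f as + potop N par B g as"
  by (simp add: potop_def brk_add deg1_add)

lemma graded_twist:
  assumes G: "graded N par G" and g: "g \<in> G"
  shows "twist par g \<in> G"
proof -
  have "twist par g = evpart par g - odpart par g" by (simp add: twist_def evpart_def odpart_def fun_eq_iff)
  then show ?thesis using subsp_diff[OF graded_subsp[OF G] graded_evpart[OF G g] graded_odpart[OF G g]] by simp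
qed

lemma Srest_subset_Smeet:
  fixes H P G :: "'k::comm_ring_1 vec set"
  shows "Srest N par d H P G \<subseteq> Smeet N par d (H \<union> P \<union> G) (H \<union> P)"
  unfolding Srest_def Smeet_def
proof (rule kspan_mono, rule subsetI)
  fix f assume "f \<in> {vprod N par (hs @ ps @ gs) | hs ps gs. set hs \<subseteq> H \<and> set ps \<subseteq> P \<and>
    set gs \<subseteq> G \<and> length hs + length ps + length gs = d \<and> (hs \<noteq> [] \<or> ps \<noteq> [])}"
  then obtain hs ps gs where f: "f = vprod N par (hs @ ps @ gs)"
    and h: "set hs \<subseteq> H" "set ps \<subseteq> P" "set gs \<subseteq> G" "length hs + length ps + length gs = d"
      "hs \<noteq> [] \<or> ps \<noteq> []"
    by blast
  have "\<exists>z\<in>H \<union> P. z \<in> set (hs @ ps @ gs)" using h by (auto simp: neq_Nil_conv)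
  then show "f \<in> {vprod N par vs | vs. length vs = d \<and> set vs \<subseteq> H \<union> P \<union> G \<and>
      (\<exists>z\<in>H \<union> P. z \<in> set vs)}"
    using f h by (intro CollectI exI[of _ "hs @ ps @ gs"]) auto
qed

lemma potop_Ssub_mem:
  assumes Bev: "\<forall>i<N. \<forall>j<N. par i \<noteq> par j \<longrightarrow> B i j = 0"
    and A: "graded N par A" and f: "f \<in> Ssub N par (Suc n) A" and as: "length as = n"
  shows "potop N par B f as \<in> A"
  unfolding potop_def
  by (rule deg1_Ssub_one[OF graded_subsp[OF A] subset_refl brk_Ssub[OF Bev graded_parts[OF A]]])
    (use f as in simp)

lemma potop_Srest_mem:
  assumes Bev: "\<forall>i<N. \<forall>j<N. par i \<noteq> par j \<longrightarrow> B i j = 0"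
    and H: "graded N par H" and P: "graded N par P" and G: "graded N par G"
    and orth: "\<forall>g\<in>G. \<forall>z\<in>H \<union> P. bform N B g z = 0"
    and rho: "rho \<in> Srest N par (Suc n) H P G" and as: "length as = n" "set as \<subseteq> G"
  shows "potop N par B rho as \<in> splus H P"
proof -
  have cl: "\<forall>a\<in>H \<union> P \<union> G. evpart par a \<in> H \<union> P \<union> G \<and> odpart par a \<in> H \<union> P \<union> G"
    and clZ: "\<forall>a\<in>H \<union> P. evpart par a \<in> H \<union> P \<and> odpart par a \<in> H \<union> P"
    using graded_parts[OF H] graded_parts[OF P] graded_parts[OF G] by blast+
  have "brk N par B as rho \<in> Smeet N par (Suc 0) (H \<union> P \<union> G) (H \<union> P)"
    by (rule brk_Smeet[OF Bev cl clZ _ orth as(2)])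
      (use graded_twist[OF G] Srest_subset_Smeet[of N par "Suc n" H P G] rho as(1) in auto)
  moreover have "H \<union> P \<subseteq> splus H P"
    using splus_upper_left[OF graded_subsp[OF P]] splus_upper_right[OF graded_subsp[OF H]] by blast
  ultimately show ?thesis
    unfolding potop_def
    by (rule deg1_Smeet_one[OF subsp_splus[OF graded_subsp[OF H] graded_subsp[OF P]], rotated])
qed

lemma coset_op_eq_coset_potop:
  fixes B :: "nat \<Rightarrow> nat \<Rightarrow> 'k::field"
  assumes even: "even_form N par B" and skew: "superskew N par B" and n1: "1 \<le> n"
    and I: "ideal N par n op I" and P_def: "P = perp N B I" and PI: "P \<subseteq> I"
    and H: "graded N par H" and iso: "isotropic N B H" and nd: "nondeg_on N B (splus H P)"
    and G_def: "G = perp N B (splus P H)" and GI: "G \<subseteq> I"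
    and op_pot: "\<forall>as. length as = n \<and> set as \<subseteq> V N \<longrightarrow> op as = potop N par B lam as"
    and mu: "mu \<in> Ssub N par (Suc n) G"
    and rho: "rho \<in> Srest N par (Suc n) H P G" and lam: "lam = (\<lambda>m. mu m + rho m)"
    and as: "length as = n" "set as \<subseteq> G"
  shows "coset P (op as) = coset P (potop N par B mu as)"
proof -
  have gI: "graded N par I" using I by (simp add: ideal_def)
  have gP: "graded N par P" unfolding P_def by (rule perp_graded[OF even skew gI])
  have gG: "graded N par G" unfolding G_def by (rule perp_graded[OF even skew graded_splus[OF gP H]])
  have Bev: "\<forall>i<N. \<forall>j<N. par i \<noteq> par j \<longrightarrow> B i j = 0" by (rule even_form_gram[OF even])
  have asV: "set as \<subseteq> V N" using as GI graded_subset_V[OF gI] by blast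
  have "\<forall>g\<in>G. \<forall>z\<in>H \<union> P. bform N B g z = 0"
    using G_def bform_perp_left splus_upper_left[OF graded_subsp[OF H]]
      splus_upper_right[OF graded_subsp[OF gP]] by blast
  then obtain h p where hp: "potop N par B rho as = h + p" "h \<in> H" "p \<in> P"
    using splus_memE[OF potop_Srest_mem[OF Bev H gP gG _ rho as]] by blast
  have op_eq: "op as = potop N par B mu as + (h + p)"
    using op_pot as asV lam hp(1) by (simp add: potop_add)
  have "as \<noteq> []" using as(1) n1 by auto
  then have "op as \<in> I"
    using I[unfolded ideal_def, THEN conjunct2, rule_format, of as] as asV GI last_in_set by blast
  then have hI: "h \<in> I"
    using op_eq potop_Ssub_mem[OF Bev gG mu as(1)] hp(3) GI PI
      subsp_diff[OF graded_subsp[OF gI]] by (metis add_diff_cancel_left' diff_diff_eq2 subsetD)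
  have "h = 0"
  proof (rule nondeg_on_splus_orth_zero[OF nd])
    show "h \<in> splus H P" using hp(2) splus_upper_left[OF graded_subsp[OF gP]] by blast
    show "\<forall>x\<in>H. bform N B h x = 0" using iso hp(2) by (simp add: isotropic_def)
    show "\<forall>x\<in>P. bform N B h x = 0" using bform_perp_right[OF even skew gI hI] P_def by blast
  qed
  then show ?thesis using op_eq coset_add_member[OF graded_subsp[OF gP] hp(3)] by simp
qed

theorem mainTheorem2:
  fixes N n :: nat and par :: "nat \<Rightarrow> bool" and B :: "nat \<Rightarrow> nat \<Rightarrow> 'k::field_char_0"
    and op :: "'k vec list \<Rightarrow> 'k vec" and lam mu :: "'k spoly"
    and I H Ip W G :: "'k vec set"
  assumes n_pos: "1 \<le> n"
    and form_even: "even_form N par B"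
    and form_skew: "superskew N par B"
    and form_nondeg: "nondeg_on N B (V N)"
    and op_multilinear: "multilinear N n op"
    and op_comm: "commutative N par n op"
    and op_inv: "invariant N par B n op"
    and irred: "irreducible N par B n op"
    and not_simple: "\<not> simple N par n op"
    and lam_deg: "Sdeg N par (Suc n) lam"
    and lam_potential: "\<forall>as. length as = n \<and> set as \<subseteq> V N \<longrightarrow> op as = potop N par B lam as"
    and I_max: "maximal_nontrivial_ideal N par n op I"
    and Ip_def: "Ip = perp N B I"
    and H_graded: "graded N par H"
    and H_iso: "isotropic N B H"
    and H_Ip: "H \<inter> Ip = {vzero}"
    and H_Ip_nondeg: "nondeg_on N B (splus H Ip)"
    and W_def: "W = splus Ip H"
    and G_def: "G = perp N B W"
    and mu_in: "mu \<in> Ssub N par (Suc n) G"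
    and mu_component: "\<exists>rho \<in> Srest N par (Suc n) H Ip G. lam = (\<lambda>m. mu m + rho m)"
  shows "Ip \<subseteq> I \<and> G \<subseteq> I \<and> bij_betw (coset Ip) G (quot I Ip) \<and>
    (\<forall>as. length as = n \<and> set as \<subseteq> G \<longrightarrow>
       coset Ip (op as) = coset Ip (potop N par B mu as))"
proof -
  have I: "ideal N par n op I"
    using I_max by (simp add: maximal_nontrivial_ideal_def nontrivial_ideal_def)
  have gI: "graded N par I" using I by (simp add: ideal_def)
  have IpI: "Ip \<subseteq> I"
    unfolding Ip_def by (rule perp_subset_maximal_ideal[OF form_even form_skew form_nondeg
      op_multilinear op_comm op_inv n_pos irred I_max])
  have GI: "G \<subseteq> I"
    unfolding G_def W_def Ip_def
    by (rule perp_splus_perp_subset[OF form_even form_skew form_nondeg gI graded_subsp[OF H_graded]])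
  have "bij_betw (coset Ip) G (quot I Ip)"
    unfolding bij_betw_def
    using inj_on_coset_perp_splus[OF H_Ip_nondeg _ graded_subsp[OF H_graded]]
      coset_perp_image[OF form_even form_skew gI Ip_def IpI H_graded H_iso H_Ip_nondeg _ GI]
      perp_subsp[of N B I] Ip_def G_def W_def by auto
  moreover obtain rho where "rho \<in> Srest N par (Suc n) H Ip G" "lam = (\<lambda>m. mu m + rho m)"
    using mu_component by blast
  then have "coset Ip (op as) = coset Ip (potop N par B mu as)" if "length as = n" "set as \<subseteq> G" for as
    using coset_op_eq_coset_potop[OF form_even form_skew n_pos I Ip_def IpI H_graded H_iso
      H_Ip_nondeg _ GI lam_potential mu_in] that G_def W_def by blast
  ultimately show ?thesis using IpI GI by blast
qed

end
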